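(* Consider $K\ge 2$ arms, $1\le m<K$, quantile level $\tau\in(0,1)$ and budget $N\ge\frac{4}{1-\tau}\overline{\log}(K)+K$, where $\overline{\log}(K)=\frac12+\sum_{i=2}^K\frac1i$. Each arm $i$ has an unknown reward distribution $F_i$ (arms independent, samples i.i.d. within an arm) satisfying the IHR assumption with hazard-rate lower bound $L_i>0$ and having a continuously differentiable density, and $b_i\ge0$ is a constant with $|\mathbb{E}[X^i_{(\lfloor n(1-\tau)\rfloor)}]-Q^\tau_i|\le b_i/n$ for all $n$ (where $X^i_{(j)}$ are order statistics of $n$ samples of arm $i$). Assume the set $\mathcal{S}_m^\ast$ of $m$ arms with the largest $\tau$-quantiles is unique. Then the Q-SAR algorithm returns a set $\mathcal{S}_m^N$ satisfying $$e_N:=\mathbb{P}\big(\mathcal{S}_m^N\ne\mathcal{S}_m^\ast\big)\le 2K^2\exp\Big(-\frac{N-K}{\overline{\log}(K)\,H^\tau}\Big),$$ where $H^\tau=\max_{i,j\in\{1,\dots,K\}}\frac{8j}{1-\tau}\Big(\frac{4\alpha}{L_i^2\Delta_{(j)}^2}+\frac{\beta_i}{L_i^2\Delta_{(j)}}\Big)$, $\alpha=\frac{4(1+\tau)}{1-\tau}$, $\beta_i=\frac43\big(2L_i+b_i(1-\tau)L_i^2\big)$.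
   Context: IHR assumption for a distribution: support $[0,\infty)$, density $f$, c.d.f. $F$, hazard rate $h=f/(1-F)$ non-decreasing, $L=\inf_x h(x)>0$. $Q^\tau_i:=\inf\{x:F_i(x)\ge\tau\}$. For $n$ samples of arm $i$ sorted decreasingly $X^i_{(1)}\ge\cdots\ge X^i_{(n)}$, the empirical quantile is $\hat Q^\tau_{i,n}:=X^i_{(\lfloor n(1-\tau)\rfloor)}$. Order arms as $o_1,\dots,o_K$ with $Q^\tau_{o_1}\ge\cdots\ge Q^\tau_{o_K}$; $\mathcal{S}_m^\ast=\{o_1,\dots,o_m\}$. Gaps: $\Delta_i=Q^\tau_i-Q^\tau_{o_{m+1}}$ if $i\in\mathcal{S}_m^\ast$, $\Delta_i=Q^\tau_{o_m}-Q^\tau_i$ otherwise; $\Delta_{(1)}\le\cdots\le\Delta_{(K)}$ are the gaps sorted non-decreasingly. Q-SAR algorithm: set $n_0=0$, $n_p=\big\lceil\frac{1}{\overline{\log}(K)}\frac{N-K}{K+1-p}\big\rceil$ for $p=1,\dots,K-1$; active set $\mathcal{A}_1=\{1,\dots,K\}$, accepted set $\mathcal{M}_1=\emptyset$, $l_1=m$. For each phase $p=1,\dots,K-1$: (1) sample each $i\in\mathcal{A}_p$ a further $n_p-n_{p-1}$ times (so each active arm has $n_p$ samples); (2) sort the active arms by empirical quantile $\hat Q^\tau_{i,n_p}$ in non-increasing order as $a_1,\dots,a_{K+1-p}$ (ties broken arbitrarily); (3) compute $\hat\Delta_{best}=\hat Q^\tau_{a_1,n_p}-\hat Q^\tau_{a_{l_p+1},n_p}$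 and $\hat\Delta_{worst}=\hat Q^\tau_{a_{l_p},n_p}-\hat Q^\tau_{a_{K+1-p},n_p}$; if $\hat\Delta_{best}>\hat\Delta_{worst}$, set $\mathcal{A}_{p+1}=\mathcal{A}_p\setminus\{a_1\}$, $\mathcal{M}_{p+1}=\mathcal{M}_p\cup\{a_1\}$, $l_{p+1}=l_p-1$; otherwise set $\mathcal{A}_{p+1}=\mathcal{A}_p\setminus\{a_{K+1-p}\}$, $\mathcal{M}_{p+1}=\mathcal{M}_p$, $l_{p+1}=l_p$. Return $\mathcal{S}_m^N=\mathcal{A}_K\cup\mathcal{M}_K$. *)

theory Defs
  imports "HOL-Probability.Probability"
begin

definition dens_meas :: "(real \<Rightarrow> real) \<Rightarrow> real measure" where
  "dens_meas f = density lborel (\<lambda>x. ennreal (f x))"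

definition Fcdf :: "(real \<Rightarrow> real) \<Rightarrow> real \<Rightarrow> real" where
  "Fcdf f = cdf (dens_meas f)"

definition hazard :: "(real \<Rightarrow> real) \<Rightarrow> real \<Rightarrow> real" where
  "hazard f x = f x / (1 - Fcdf f x)"

definition hazard_lb :: "(real \<Rightarrow> real) \<Rightarrow> real" where
  "hazard_lb f = (INF x\<in>{0..}. hazard f x)"

definition IHR :: "(real \<Rightarrow> real) \<Rightarrow> bool" where
  "IHR f \<longleftrightarrow> f \<in> borel_measurable lborel \<and> (\<forall>x. 0 \<le> f x) \<and> (\<forall>x<0. f x = 0)
     \<and> prob_space (dens_meas f) \<and> mono_on {0..} (hazard f) \<and> hazard_lb f > 0"

definition C1_density :: "(real \<Rightarrow> real) \<Rightarrow> bool" where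
  "C1_density f \<longleftrightarrow> (\<exists>f'. continuous_on {0..} f' \<and>
       (\<forall>x\<ge>0. (f has_real_derivative f' x) (at x within {0..})))"

definition quantile :: "(real \<Rightarrow> real) \<Rightarrow> real \<Rightarrow> real" where
  "quantile f \<tau> = Inf {x. \<tau> \<le> Fcdf f x}"

text \<open>X_(j) for j = 1..n: the j-th largest sample (samples sorted decreasingly).
  Convention: index 0 is read as 1 (nat subtraction).\<close>
definition order_stat :: "real list \<Rightarrow> nat \<Rightarrow> real" where
  "order_stat xs j = rev (sort xs) ! (j - 1)"

definition emp_quantile :: "real \<Rightarrow> real list \<Rightarrow> real" where
  "emp_quantile \<tau> xs = order_stat xs (nat \<lfloor>real (length xs) * (1 - \<tau>)\<rfloor>)"

definition logbar :: "nat \<Rightarrow> real" where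
  "logbar K = 1/2 + (\<Sum>i=2..K. 1 / real i)"

definition n_phase :: "nat \<Rightarrow> nat \<Rightarrow> nat \<Rightarrow> nat" where
  "n_phase N K p = (if p = 0 then 0
     else nat \<lceil>(1 / logbar K) * ((real N - real K) / real (K + 1 - p))\<rceil>)"

text \<open>One phase p.  q i n is the empirical tau-quantile of the first n samples of arm i.
  Active arms are sorted by non-increasing empirical quantile (ties broken by arm index,
  via the stable sort).  State = (active set A, accepted set M, l).
  Degenerate cases: l = 0 (no a_l): reject the worst; l \<ge> |A| (no a_{l+1}): accept the best.\<close>
definition qsar_phase :: "nat \<Rightarrow> nat \<Rightarrow> (nat \<Rightarrow> nat \<Rightarrow> real) \<Rightarrow> nat
      \<Rightarrow> nat set \<times> nat set \<times> nat \<Rightarrow> nat set \<times> nat set \<times> nat" where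
  "qsar_phase N K q p st = (case st of (A, Acc, l) \<Rightarrow>
     (let n = n_phase N K p;
          as = sort_key (\<lambda>i. - q i n) (sorted_list_of_set A);
          r = length as;
          a1 = as ! 0;
          ar = as ! (r - 1);
          accept = (A - {a1}, Acc \<union> {a1}, l - 1);
          reject = (A - {ar}, Acc, l)
      in if l = 0 then reject
         else if r \<le> l then accept
         else (let dbest = q a1 n - q (as ! l) n;
                   dworst = q (as ! (l - 1)) n - q ar n
               in if dbest > dworst then accept else reject)))"

fun qsar_iter :: "nat \<Rightarrow> nat \<Rightarrow> nat \<Rightarrow> (nat \<Rightarrow> nat \<Rightarrow> real) \<Rightarrow> nat
      \<Rightarrow> nat set \<times> nat set \<times> nat" where
  "qsar_iter N K m q 0 = ({1..K}, {}, m)"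
| "qsar_iter N K m q (Suc p) = qsar_phase N K q (Suc p) (qsar_iter N K m q p)"

definition qsar :: "nat \<Rightarrow> nat \<Rightarrow> nat \<Rightarrow> (nat \<Rightarrow> nat \<Rightarrow> real) \<Rightarrow> nat set" where
  "qsar N K m q = (case qsar_iter N K m q (K - 1) of (A, Acc, l) \<Rightarrow> A \<union> Acc)"

text \<open>Q : arm \<Rightarrow> quantile, S = optimal set, arms 1..K\<close>
definition gap :: "nat \<Rightarrow> (nat \<Rightarrow> real) \<Rightarrow> nat set \<Rightarrow> nat \<Rightarrow> real" where
  "gap K Q S i = (if i \<in> S then Q i - Max (Q ` ({1..K} - S))
                  else Min (Q ` S) - Q i)"

definition sorted_gap :: "nat \<Rightarrow> (nat \<Rightarrow> real) \<Rightarrow> nat set \<Rightarrow> nat \<Rightarrow> real" where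
  "sorted_gap K Q S j = sort (map (gap K Q S) [1..<K+1]) ! (j - 1)"

definition H_tau :: "nat \<Rightarrow> real \<Rightarrow> (nat \<Rightarrow> real) \<Rightarrow> nat set \<Rightarrow> (nat \<Rightarrow> real) \<Rightarrow> (nat \<Rightarrow> real) \<Rightarrow> real" where
  "H_tau K \<tau> Q S L b =
     (let \<alpha> = 4 * (1 + \<tau>) / (1 - \<tau>);
          \<beta> = (\<lambda>i. 4/3 * (2 * L i + b i * (1 - \<tau>) * (L i)^2))
      in Max ((\<lambda>(i,j). 8 * real j / (1 - \<tau>) *
                 (4 * \<alpha> / ((L i)^2 * (sorted_gap K Q S j)^2)
                  + \<beta> i / ((L i)^2 * sorted_gap K Q S j))) ` ({1..K} \<times> {1..K})))"

end

(*
  Q-SAR can only err if in some phase p the empirical quantile of some arm misses its true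
  quantile by a quarter of the gap Delta_(K+1-p): with all estimates that accurate, the arm
  accepted or rejected in each phase is the right one.

  Under IHR the survival function decays at rate at least L beyond every point, so a sample
  exceeds Q + delta with probability at most (1 - tau) exp (-L delta) and exceeds Q - delta
  with probability at least min 1 ((1 - tau) exp (L delta)).  The empirical quantile is
  determined by how many samples exceed a level, so Chernoff bounds for these counts give a
  deviation probability exp (-T) as soon as n_p (1 - tau) >= T * quantile_cost tau (L delta),
  and the phase lengths of Q-SAR guarantee this for T = (N - K) / (logbar K * H_tau).  A union
  bound over the phases, the arms and both tails gives the factor 2 K^2.
*)

theory Submission
  imports Defs
begin

section \<open>Increasing-hazard-rate distributions\<close>

lemma IHR_real_distribution:
  assumes "IHR f"
  shows "real_distribution (dens_meas f)"
  using assms unfolding IHR_def real_distribution_def real_distribution_axioms_def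
  by (simp add: dens_meas_def)

lemma IHR_measure_null:
  assumes "IHR f" "A \<in> sets borel" "AE x in lborel. x \<in> A \<longrightarrow> f x = 0"
  shows "measure (dens_meas f) A = 0"
proof -
  have "(\<lambda>x. ennreal (f x)) \<in> borel_measurable lborel"
    using assms(1) unfolding IHR_def by auto
  then have "A \<in> null_sets (dens_meas f)"
    unfolding dens_meas_def using assms(2,3) by (auto simp: null_sets_density_iff elim!: AE_mp)
  then show ?thesis by (simp add: measure_def null_setsD1)
qed

lemma IHR_measure_singleton:
  assumes "IHR f"
  shows "measure (dens_meas f) {a} = 0"
proof (rule IHR_measure_null[OF assms])
  show "AE x in lborel. x \<in> {a} \<longrightarrow> f x = 0"
    using AE_lborel_singleton[of a] by eventually_elim auto
qed simp

lemma IHR_Fcdf_nonpos: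
  assumes "IHR f" "x \<le> 0"
  shows "Fcdf f x = 0"
proof -
  have "measure (dens_meas f) {..x} = 0"
    by (rule IHR_measure_null[OF assms(1)])
       (use assms in \<open>auto simp: IHR_def intro: AE_mp[OF AE_lborel_singleton[of 0]]\<close>)
  then show ?thesis unfolding Fcdf_def cdf_def by simp
qed

lemma IHR_Fcdf_mono: "IHR f \<Longrightarrow> x \<le> y \<Longrightarrow> Fcdf f x \<le> Fcdf f y"
  unfolding Fcdf_def
  by (rule finite_borel_measure.cdf_nondecreasing
      [OF real_distribution.finite_borel_measure_M[OF IHR_real_distribution]])

lemma IHR_Fcdf_le_1: "IHR f \<Longrightarrow> Fcdf f x \<le> 1"
  unfolding Fcdf_def using real_distribution.cdf_bounded_prob[OF IHR_real_distribution] by auto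

lemma IHR_continuous_Fcdf: "IHR f \<Longrightarrow> continuous_on A (Fcdf f)"
  unfolding Fcdf_def
  by (intro continuous_at_imp_continuous_on ballI)
     (simp add: finite_borel_measure.isCont_cdf IHR_measure_singleton
        real_distribution.finite_borel_measure_M[OF IHR_real_distribution])

lemma IHR_measure_greaterThan: "IHR f \<Longrightarrow> measure (dens_meas f) {u<..} = 1 - Fcdf f u"
proof -
  assume "IHR f"
  then interpret real_distribution "dens_meas f" by (rule IHR_real_distribution)
  have "{u<..} = space (dens_meas f) - {..u}" by auto
  then show ?thesis using prob_compl[of "{..u}"] unfolding Fcdf_def cdf_def by simp
qed

lemma IHR_measure_atLeast: "IHR f \<Longrightarrow> measure (dens_meas f) {u..} = 1 - Fcdf f u"
proof -
  assume f: "IHR f"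
  then interpret real_distribution "dens_meas f" by (rule IHR_real_distribution)
  have "{u..} = {u<..} \<union> {u}" by auto
  then show ?thesis
    using finite_measure_Union[of "{u<..}" "{u}"] f
    by (simp add: IHR_measure_greaterThan IHR_measure_singleton)
qed

lemma IHR_hazard_lb_le: "IHR f \<Longrightarrow> 0 \<le> t \<Longrightarrow> hazard_lb f \<le> hazard f t"
  unfolding hazard_lb_def IHR_def
  by (rule cINF_lower, rule bdd_belowI2[of _ "hazard f 0"]) (auto simp: mono_on_def)

lemma IHR_density_ge:
  assumes "IHR f" "0 \<le> t"
  shows "hazard_lb f * (1 - Fcdf f t) \<le> f t"
proof (cases "Fcdf f t = 1")
  case True
  then show ?thesis using assms unfolding IHR_def by auto
next
  case False
  then have "0 < 1 - Fcdf f t" using IHR_Fcdf_le_1[OF assms(1), of t] by linarith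
  then show ?thesis
    using IHR_hazard_lb_le[OF assms] by (simp add: hazard_def field_simps)
qed

text \<open>The survival function \<open>1 - F\<close> decays at least at rate \<open>L\<close>:
  on \<open>[u, v]\<close> the density is at least \<open>L (1 - F v)\<close>.  Subdividing \<open>[u, v]\<close>
  into \<open>k\<close> pieces and letting \<open>k \<rightarrow> \<infinity>\<close> turns \<open>1 + L d\<close> into \<open>exp (L d)\<close>.\<close>

lemma IHR_survival_step:
  assumes f: "IHR f" and uv: "0 \<le> u" "u \<le> v"
  shows "(1 - Fcdf f v) * (1 + hazard_lb f * (v - u)) \<le> 1 - Fcdf f u"
proof -
  interpret real_distribution "dens_meas f" by (rule IHR_real_distribution[OF f])
  define c where "c = hazard_lb f * (1 - Fcdf f v)"
  have "0 \<le> c"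
    unfolding c_def using f IHR_Fcdf_le_1[OF f] by (auto simp: IHR_def)
  have fm: "(\<lambda>x. ennreal (f x)) \<in> borel_measurable lborel" using f unfolding IHR_def by auto
  have "ennreal (c * (v - u)) = (\<integral>\<^sup>+ x. ennreal c * indicator {u<..v} x \<partial>lborel)"
    using uv \<open>0 \<le> c\<close> by (simp add: nn_integral_cmult_indicator ennreal_mult)
  also have "\<dots> \<le> (\<integral>\<^sup>+ x. ennreal (f x) * indicator {u<..v} x \<partial>lborel)"
  proof (intro nn_integral_mono)
    fix x
    have "c \<le> f x" if "u < x" "x \<le> v"
    proof -
      have "c \<le> hazard_lb f * (1 - Fcdf f x)"
        unfolding c_def using f IHR_Fcdf_mono[OF f \<open>x \<le> v\<close>]
        by (intro mult_left_mono) (auto simp: IHR_def)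
      also have "\<dots> \<le> f x" using IHR_density_ge[OF f] that uv by simp
      finally show ?thesis .
    qed
    then show "ennreal c * indicator {u<..v} x \<le> ennreal (f x) * indicator {u<..v} x"
      by (auto simp: indicator_def ennreal_leI)
  qed
  also have "\<dots> = emeasure (dens_meas f) {u<..v}"
    unfolding dens_meas_def by (simp add: emeasure_density[OF fm])
  also have "\<dots> = ennreal (measure (dens_meas f) {u<..v})"
    by (simp add: emeasure_eq_measure)
  finally have "c * (v - u) \<le> measure (dens_meas f) {u<..v}"
    by (simp add: ennreal_le_iff)
  also have "\<dots> = Fcdf f v - Fcdf f u"
    using uv cdf_diff_eq[of u v] by (cases "u = v") (auto simp: Fcdf_def)
  finally show ?thesis unfolding c_def by (simp add: algebra_simps)
qed

lemma IHR_survival_power: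
  assumes f: "IHR f" and "0 \<le> u" "0 \<le> d"
  shows "(1 - Fcdf f (u + real k * d)) * (1 + hazard_lb f * d) ^ k \<le> 1 - Fcdf f u"
proof (induction k)
  case (Suc k)
  have "0 \<le> hazard_lb f" using f unfolding IHR_def by auto
  then have "(1 - Fcdf f (u + real k * d + d)) * (1 + hazard_lb f * d) * (1 + hazard_lb f * d) ^ k
      \<le> (1 - Fcdf f (u + real k * d)) * (1 + hazard_lb f * d) ^ k"
    using IHR_survival_step[OF f, of "u + real k * d" "u + real k * d + d"] assms
    by (intro mult_right_mono) auto
  with Suc.IH show ?case by (simp add: algebra_simps)
qed simp

lemma IHR_survival_exp:
  assumes f: "IHR f" and uv: "0 \<le> u" "u \<le> v"
  shows "(1 - Fcdf f v) * exp (hazard_lb f * (v - u)) \<le> 1 - Fcdf f u"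
proof (rule LIMSEQ_le_const2)
  define a where "a = hazard_lb f * (v - u)"
  show "(\<lambda>n. (1 - Fcdf f v) * (1 + a / real n) ^ n) \<longlonglongrightarrow> (1 - Fcdf f v) * exp a"
    by (intro tendsto_mult_left tendsto_exp_limit_sequentially)
  show "\<exists>N. \<forall>n\<ge>N. (1 - Fcdf f v) * (1 + a / real n) ^ n \<le> 1 - Fcdf f u"
  proof (intro exI allI impI)
    fix n :: nat assume "1 \<le> n"
    then show "(1 - Fcdf f v) * (1 + a / real n) ^ n \<le> 1 - Fcdf f u"
      using IHR_survival_power[OF f \<open>0 \<le> u\<close>, of "(v - u) / real n" n] uv
      by (simp add: a_def)
  qed
qed

lemma IHR_quantile:
  assumes f: "IHR f" and tau: "0 < \<tau>" "\<tau> < 1"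
  shows "0 < quantile f \<tau>" "Fcdf f (quantile f \<tau>) = \<tau>"
    "\<And>y. \<tau> \<le> Fcdf f y \<Longrightarrow> quantile f \<tau> \<le> y"
proof -
  interpret real_distribution "dens_meas f" by (rule IHR_real_distribution[OF f])
  let ?U = "{x. \<tau> \<le> Fcdf f x}"
  have pos: "0 < x" if "x \<in> ?U" for x
    using that IHR_Fcdf_nonpos[OF f, of x] tau by force
  have "eventually (\<lambda>x. \<tau> < Fcdf f x) at_top"
    using order_tendstoD(1)[OF cdf_lim_at_top_prob tau(2)] by (simp add: Fcdf_def)
  then obtain y where y: "\<tau> \<le> Fcdf f y"
    by (auto simp: eventually_at_top_linorder intro: less_imp_le)
  have bdd: "bdd_below ?U" using pos by (auto intro!: bdd_belowI[of _ 0] less_imp_le)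
  show le: "\<And>y. \<tau> \<le> Fcdf f y \<Longrightarrow> quantile f \<tau> \<le> y"
    unfolding quantile_def by (rule cInf_lower) (use bdd in auto)
  have "closed ?U"
    by (rule closed_Collect_le) (auto intro: IHR_continuous_Fcdf[OF f])
  then have "quantile f \<tau> \<in> ?U"
    unfolding quantile_def using y bdd by (intro closed_contains_Inf) auto
  then show "0 < quantile f \<tau>" using pos by blast
  \<comment> \<open>an intermediate value \<open>z \<le> y\<close> with \<open>F z = \<tau>\<close> bounds \<open>F Q\<close> from above\<close>
  obtain z where "z \<le> y" "Fcdf f z = \<tau>"
    using IVT'[of "Fcdf f" 0 \<tau> y] IHR_Fcdf_nonpos[OF f, of 0] y tau pos[of y]
      IHR_continuous_Fcdf[OF f] by force
  then show "Fcdf f (quantile f \<tau>) = \<tau>"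
    using \<open>quantile f \<tau> \<in> ?U\<close> IHR_Fcdf_mono[OF f le[of z]] by simp
qed

lemma IHR_quantile_hazard_lb_le:
  assumes f: "IHR f" and tau: "0 < \<tau>" "\<tau> < 1"
  shows "quantile f \<tau> * hazard_lb f \<le> - ln (1 - \<tau>)"
proof -
  define L where "L = hazard_lb f"
  have L0: "0 < L" using f unfolding IHR_def L_def by auto
  define y where "y = - ln (1 - \<tau>) / L"
  have y0: "0 \<le> y" unfolding y_def using L0 tau by (simp add: divide_nonpos_pos)
  have "exp (L * y) = 1 / (1 - \<tau>)"
    unfolding y_def using L0 tau by (simp add: exp_minus inverse_eq_divide)
  then have "(1 - Fcdf f y) / (1 - \<tau>) \<le> 1"
    using IHR_survival_exp[OF f order_refl y0] IHR_Fcdf_nonpos[OF f, of 0] by (simp add: L_def)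
  then have "quantile f \<tau> \<le> y" using tau by (intro IHR_quantile(3)[OF f tau]) (simp add: divide_le_eq)
  then show ?thesis unfolding y_def L_def[symmetric] using L0 by (simp add: le_divide_eq field_simps)
qed

lemma IHR_upper_tail:
  assumes f: "IHR f" and tau: "0 < \<tau>" "\<tau> < 1" and "0 \<le> \<epsilon>" "0 \<le> L" "L \<le> hazard_lb f"
  shows "measure (dens_meas f) {quantile f \<tau> + \<epsilon>..} \<le> (1 - \<tau>) * exp (- L * \<epsilon>)"
proof -
  define Q where "Q = quantile f \<tau>"
  have "(1 - Fcdf f (Q + \<epsilon>)) * exp (hazard_lb f * \<epsilon>) \<le> 1 - \<tau>"
    using IHR_survival_exp[OF f, of Q "Q + \<epsilon>"] IHR_quantile[OF f tau] assms(4)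
    unfolding Q_def by simp
  moreover have "exp (L * \<epsilon>) \<le> exp (hazard_lb f * \<epsilon>)"
    using assms by (simp add: mult_right_mono)
  moreover have "0 \<le> 1 - Fcdf f (Q + \<epsilon>)" using IHR_Fcdf_le_1[OF f] by simp
  ultimately have "(1 - Fcdf f (Q + \<epsilon>)) * exp (L * \<epsilon>) \<le> 1 - \<tau>"
    by (meson mult_left_mono order_trans)
  then have "1 - Fcdf f (Q + \<epsilon>) \<le> (1 - \<tau>) * exp (- L * \<epsilon>)"
    by (simp add: exp_minus field_simps)
  then show ?thesis using IHR_measure_atLeast[OF f] unfolding Q_def by simp
qed

lemma IHR_lower_tail:
  assumes f: "IHR f" and tau: "0 < \<tau>" "\<tau> < 1" and "0 \<le> \<epsilon>" "0 \<le> L" "L \<le> hazard_lb f"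
  shows "min 1 ((1 - \<tau>) * exp (L * \<epsilon>)) \<le> measure (dens_meas f) {quantile f \<tau> - \<epsilon><..}"
proof -
  define Q where "Q = quantile f \<tau>"
  have "min 1 ((1 - \<tau>) * exp (L * \<epsilon>)) \<le> 1 - Fcdf f (Q - \<epsilon>)"
  proof (cases "0 \<le> Q - \<epsilon>")
    case True
    have "(1 - \<tau>) * exp (hazard_lb f * \<epsilon>) \<le> 1 - Fcdf f (Q - \<epsilon>)"
      using IHR_survival_exp[OF f True, of Q] IHR_quantile[OF f tau] assms(4)
      unfolding Q_def by simp
    moreover have "exp (L * \<epsilon>) \<le> exp (hazard_lb f * \<epsilon>)"
      using assms by (simp add: mult_right_mono)
    ultimately show ?thesis using tau by (smt (verit) mult_left_mono)
  next
    case False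
    then show ?thesis using IHR_Fcdf_nonpos[OF f, of "Q - \<epsilon>"] by simp
  qed
  then show ?thesis using IHR_measure_greaterThan[OF f] unfolding Q_def by simp
qed

section \<open>Empirical quantiles as counts\<close>

lemma sorted_rev_upclosed_nth_iff:
  fixes zs :: "'a::linorder list"
  assumes zs: "sorted (rev zs)" and P: "\<And>u v. u \<le> v \<Longrightarrow> P u \<Longrightarrow> P v" and k: "k < length zs"
  shows "P (zs ! k) \<longleftrightarrow> k < length (filter P zs)"
proof -
  let ?I = "{i. i < length zs \<and> P (zs ! i)}"
  have count: "length (filter P zs) = card ?I" by (rule length_filter_conv_card)
  show ?thesis
  proof
    assume "P (zs ! k)"
    then have "{..k} \<subseteq> ?I" using P sorted_rev_nth_mono[OF zs _ k] k by auto
    then show "k < length (filter P zs)" unfolding count using card_mono[of ?I "{..k}"] by simp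
  next
    assume "k < length (filter P zs)"
    show "P (zs ! k)"
    proof (rule ccontr)
      assume "\<not> P (zs ! k)"
      have "i < k" if "i \<in> ?I" for i
      proof (rule ccontr)
        assume "\<not> i < k"
        then have "zs ! i \<le> zs ! k" using sorted_rev_nth_mono[OF zs] that by simp
        then show False using P that \<open>\<not> P (zs ! k)\<close> by blast
      qed
      then have "?I \<subseteq> {..<k}" by blast
      then show False using \<open>k < length (filter P zs)\<close> card_mono[of "{..<k}" ?I] count by simp
    qed
  qed
qed

text \<open>Index, counted from the largest sample, of the empirical \<open>\<tau>\<close>-quantile of \<open>n\<close> samples;
  the \<open>max 1\<close> reflects that \<^const>\<open>order_stat\<close> reads index \<open>0\<close> as \<open>1\<close>.\<close>
definition emp_rank :: "real \<Rightarrow> nat \<Rightarrow> nat" where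
  "emp_rank \<tau> n = max 1 (nat \<lfloor>real n * (1 - \<tau>)\<rfloor>)"

lemma emp_rank_bounds:
  assumes "0 \<le> \<tau>" "\<tau> < 1" "1 \<le> n"
  shows "1 \<le> emp_rank \<tau> n" "emp_rank \<tau> n \<le> n"
    "real n * (1 - \<tau>) - 1 \<le> real (emp_rank \<tau> n)" "real (emp_rank \<tau> n) - 1 \<le> real n * (1 - \<tau>)"
proof -
  have le: "real n * (1 - \<tau>) \<le> real n" and ge: "0 \<le> real n * (1 - \<tau>)"
    using assms by (auto simp: mult_left_le)
  show "1 \<le> emp_rank \<tau> n" unfolding emp_rank_def by simp
  have "\<lfloor>real n * (1 - \<tau>)\<rfloor> \<le> int n" using le by linarith
  then show "emp_rank \<tau> n \<le> n" unfolding emp_rank_def using assms by auto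
  show "real n * (1 - \<tau>) - 1 \<le> real (emp_rank \<tau> n)" "real (emp_rank \<tau> n) - 1 \<le> real n * (1 - \<tau>)"
    unfolding emp_rank_def using ge by (simp_all add: of_nat_max) linarith+
qed

lemma upclosed_emp_quantile_iff:
  assumes P: "\<And>u v. u \<le> v \<Longrightarrow> P u \<Longrightarrow> P v" and "0 \<le> \<tau>" "\<tau> < 1" "1 \<le> n"
  shows "P (emp_quantile \<tau> (map g [0..<n])) \<longleftrightarrow> emp_rank \<tau> n \<le> card {t\<in>{..<n}. P (g t)}"
proof -
  define zs where "zs = rev (sort (map g [0..<n]))"
  have k: "1 \<le> emp_rank \<tau> n" "emp_rank \<tau> n \<le> length zs"
    using emp_rank_bounds[OF assms(2-4)] by (auto simp: zs_def)
  have "emp_quantile \<tau> (map g [0..<n]) = zs ! (emp_rank \<tau> n - 1)"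
    unfolding emp_quantile_def order_stat_def emp_rank_def zs_def by (simp add: max_def)
  moreover have "P (zs ! (emp_rank \<tau> n - 1)) \<longleftrightarrow> emp_rank \<tau> n - 1 < length (filter P zs)"
    by (rule sorted_rev_upclosed_nth_iff) (use P k in \<open>auto simp: zs_def\<close>)
  moreover have "length (filter P zs) = length (filter P (map g [0..<n]))"
    unfolding zs_def by (simp flip: rev_filter add: filter_sort)
  moreover have "{t\<in>{..<n}. P (g t)} = {i. i < length (map g [0..<n]) \<and> P (map g [0..<n] ! i)}"
    by auto
  then have "length (filter P (map g [0..<n])) = card {t\<in>{..<n}. P (g t)}"
    by (simp only: length_filter_conv_card)
  ultimately show ?thesis using k by (metis Suc_diff_1 Suc_le_eq less_le_trans zero_less_one)
qed

lemma emp_quantile_ge_iff: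
  assumes "0 \<le> \<tau>" "\<tau> < 1" "1 \<le> n"
  shows "a \<le> emp_quantile \<tau> (map g [0..<n]) \<longleftrightarrow> emp_rank \<tau> n \<le> card {t\<in>{..<n}. a \<le> g t}"
  by (rule upclosed_emp_quantile_iff[OF _ assms]) simp

lemma emp_quantile_le_iff:
  assumes "0 \<le> \<tau>" "\<tau> < 1" "1 \<le> n"
  shows "emp_quantile \<tau> (map g [0..<n]) \<le> a \<longleftrightarrow> card {t\<in>{..<n}. a < g t} < emp_rank \<tau> n"
  using upclosed_emp_quantile_iff[OF _ assms, of "\<lambda>y. a < y" g] by (auto simp del: not_le)

lemma borel_measurable_emp_quantile:
  assumes Y: "\<And>t. t < n \<Longrightarrow> Y t \<in> borel_measurable M" and tau: "0 \<le> \<tau>" "\<tau> < 1"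
  shows "(\<lambda>\<omega>. emp_quantile \<tau> (map (\<lambda>t. Y t \<omega>) [0..<n])) \<in> borel_measurable M"
proof (cases "n = 0")
  case False
  have "{\<omega>\<in>space M. a \<le> emp_quantile \<tau> (map (\<lambda>t. Y t \<omega>) [0..<n])}
      = {\<omega>\<in>space M. real (emp_rank \<tau> n) \<le> (\<Sum>t<n. if a \<le> Y t \<omega> then 1 else 0)}" for a
    using emp_quantile_ge_iff[OF tau, of n a] False
    by (simp add: sum.If_cases Int_def)
  moreover have "(\<lambda>\<omega>. \<Sum>t<n. if a \<le> Y t \<omega> then 1 else 0 :: real) \<in> borel_measurable M" for a
  proof (intro borel_measurable_sum)
    fix t assume "t \<in> {..<n}"
    then have "Y t \<in> borel_measurable M" using Y by simp
    then show "(\<lambda>\<omega>. if a \<le> Y t \<omega> then 1 else 0 :: real) \<in> borel_measurable M" by measurable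
  qed
  then have "{\<omega>\<in>space M. real (emp_rank \<tau> n) \<le> (\<Sum>t<n. if a \<le> Y t \<omega> then 1 else 0)} \<in> sets M"
    for a by measurable
  ultimately show ?thesis by (simp add: borel_measurable_iff_ge)
qed simp

section \<open>Chernoff bounds for counts of independent events\<close>

lemma (in prob_space) indep_count_Markov:
  fixes Y :: "'i \<Rightarrow> 'a \<Rightarrow> real"
  assumes I: "finite I" and ind: "indep_vars (\<lambda>_. borel) Y I" and B: "B \<in> sets borel"
    and c: "0 < c" and w: "0 \<le> w"
  shows "{\<omega>\<in>space M. c \<le> w ^ card {t\<in>I. Y t \<omega> \<in> B}} \<in> events"
    and "prob {\<omega>\<in>space M. c \<le> w ^ card {t\<in>I. Y t \<omega> \<in> B}}
      \<le> (\<Prod>t\<in>I. 1 + prob {\<omega>\<in>space M. Y t \<omega> \<in> B} * (w - 1)) / c"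
proof -
  define g where "g = (\<lambda>y::real. if y \<in> B then w else 1)"
  have ind_g: "indep_vars (\<lambda>_. borel) (\<lambda>t. g \<circ> Y t) I"
    by (rule indep_vars_compose[OF ind]) (use B in \<open>auto simp: g_def\<close>)
  have ev: "{\<omega>\<in>space M. Y t \<omega> \<in> B} \<in> events" if "t \<in> I" for t
  proof -
    have "random_variable borel (Y t)" using ind that unfolding indep_vars_def by auto
    then show ?thesis using B by measurable
  qed
  have g_eq: "(g \<circ> Y t) \<omega> = 1 + (w - 1) * indicator {\<omega>\<in>space M. Y t \<omega> \<in> B} \<omega>"
    if "\<omega> \<in> space M" for t \<omega>
    using that by (auto simp: g_def indicator_def)
  have int: "integrable M (g \<circ> Y t)" if "t \<in> I" for t
  proof -
    have "integrable M (\<lambda>\<omega>. 1 + (w - 1) * indicator {\<omega>\<in>space M. Y t \<omega> \<in> B} \<omega>)"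
      using ev[OF that]
      by (intro Bochner_Integration.integrable_add integrable_mult_right integrable_real_indicator)
         (auto simp: emeasure_eq_measure)
    then show ?thesis
      using Bochner_Integration.integrable_cong[OF refl, of M "g \<circ> Y t"] g_eq by auto
  qed
  have E: "expectation (g \<circ> Y t) = 1 + prob {\<omega>\<in>space M. Y t \<omega> \<in> B} * (w - 1)"
    if "t \<in> I" for t
  proof -
    have "expectation (g \<circ> Y t) = expectation (\<lambda>\<omega>. 1 + (w - 1) * indicator {\<omega>\<in>space M. Y t \<omega> \<in> B} \<omega>)"
      by (rule Bochner_Integration.integral_cong) (use g_eq in auto)
    also have "\<dots> = 1 + prob {\<omega>\<in>space M. Y t \<omega> \<in> B} * (w - 1)"
      using ev[OF that] by (subst Bochner_Integration.integral_add)
        (auto simp: prob_space emeasure_eq_measure intro!: integrable_real_indicator)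
    finally show ?thesis .
  qed
  have prod_eq: "(\<Prod>t\<in>I. g (Y t \<omega>)) = w ^ card {t\<in>I. Y t \<omega> \<in> B}" for \<omega>
    using prod.inter_filter[OF I, of "\<lambda>_. w" "\<lambda>t. Y t \<omega> \<in> B"] by (simp add: g_def)
  have "(\<lambda>\<omega>. w ^ card {t\<in>I. Y t \<omega> \<in> B}) \<in> borel_measurable M"
    using borel_measurable_integrable[OF indep_vars_integrable[OF I ind_g int]] by (simp add: prod_eq)
  then show "{\<omega>\<in>space M. c \<le> w ^ card {t\<in>I. Y t \<omega> \<in> B}} \<in> events" by measurable
  have "expectation (\<lambda>\<omega>. \<Prod>t\<in>I. (g \<circ> Y t) \<omega>) = (\<Prod>t\<in>I. expectation (g \<circ> Y t))"
    by (rule indep_vars_lebesgue_integral[OF I ind_g int])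
  also have "\<dots> = (\<Prod>t\<in>I. 1 + prob {\<omega>\<in>space M. Y t \<omega> \<in> B} * (w - 1))"
    by (rule prod.cong) (simp_all add: E)
  finally have E_prod: "expectation (\<lambda>\<omega>. \<Prod>t\<in>I. (g \<circ> Y t) \<omega>)
      = (\<Prod>t\<in>I. 1 + prob {\<omega>\<in>space M. Y t \<omega> \<in> B} * (w - 1))" .
  have "prob {\<omega>\<in>space M. c \<le> w ^ card {t\<in>I. Y t \<omega> \<in> B}}
      \<le> expectation (\<lambda>\<omega>. \<Prod>t\<in>I. (g \<circ> Y t) \<omega>) / c"
    using integral_Markov_inequality_measure[where A="space M" and c=c,
        OF indep_vars_integrable[OF I ind_g int]] w c
    by (auto simp: prod_eq)
  then show "prob {\<omega>\<in>space M. c \<le> w ^ card {t\<in>I. Y t \<omega> \<in> B}}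
      \<le> (\<Prod>t\<in>I. 1 + prob {\<omega>\<in>space M. Y t \<omega> \<in> B} * (w - 1)) / c"
    unfolding E_prod .
qed

lemma (in prob_space) chernoff_count_upper:
  fixes Y :: "'i \<Rightarrow> 'a \<Rightarrow> real"
  assumes I: "finite I" and ind: "indep_vars (\<lambda>_. borel) Y I" and B: "B \<in> sets borel"
    and s: "0 \<le> s" and p: "\<And>t. t \<in> I \<Longrightarrow> prob {\<omega>\<in>space M. Y t \<omega> \<in> B} \<le> p"
  shows "prob {\<omega>\<in>space M. k \<le> card {t\<in>I. Y t \<omega> \<in> B}}
        \<le> exp (- s * k + real (card I) * p * (exp s - 1))"
proof -
  have sub: "{\<omega>\<in>space M. k \<le> card {t\<in>I. Y t \<omega> \<in> B}}
      \<subseteq> {\<omega>\<in>space M. exp (s * k) \<le> exp s ^ card {t\<in>I. Y t \<omega> \<in> B}}"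
  proof safe
    fix \<omega> assume "k \<le> card {t\<in>I. Y t \<omega> \<in> B}"
    then have "s * k \<le> s * card {t\<in>I. Y t \<omega> \<in> B}" using s by (simp add: mult_left_mono)
    then show "exp (s * k) \<le> exp s ^ card {t\<in>I. Y t \<omega> \<in> B}"
      by (simp add: exp_of_nat_mult[symmetric] mult.commute)
  qed
  note Markov = indep_count_Markov[OF I ind B, of "exp (s * k)" "exp s"]
  have "prob {\<omega>\<in>space M. k \<le> card {t\<in>I. Y t \<omega> \<in> B}}
      \<le> (\<Prod>t\<in>I. 1 + prob {\<omega>\<in>space M. Y t \<omega> \<in> B} * (exp s - 1)) / exp (s * k)"
    by (intro order_trans[OF finite_measure_mono[OF sub Markov(1)] Markov(2)]) simp_all
  also have "\<dots> \<le> (\<Prod>t\<in>I. exp (p * (exp s - 1))) / exp (s * k)"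
  proof (intro divide_right_mono prod_mono conjI)
    fix t assume "t \<in> I"
    have "1 + prob {\<omega>\<in>space M. Y t \<omega> \<in> B} * (exp s - 1) \<le> 1 + p * (exp s - 1)"
      using p[OF \<open>t \<in> I\<close>] s by (simp add: mult_right_mono)
    also have "\<dots> \<le> exp (p * (exp s - 1))" by (rule exp_ge_add_one_self[THEN order_trans[rotated]]) simp
    finally show "1 + prob {\<omega>\<in>space M. Y t \<omega> \<in> B} * (exp s - 1) \<le> exp (p * (exp s - 1))" .
  qed (use s in auto)
  also have "\<dots> = exp (- s * k + real (card I) * p * (exp s - 1))"
    by (simp add: exp_diff exp_of_nat_mult[symmetric] mult.assoc)
  finally show ?thesis .
qed

lemma (in prob_space) chernoff_count_lower:
  fixes Y :: "'i \<Rightarrow> 'a \<Rightarrow> real"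
  assumes I: "finite I" and ind: "indep_vars (\<lambda>_. borel) Y I" and B: "B \<in> sets borel"
    and s: "0 \<le> s" and q: "\<And>t. t \<in> I \<Longrightarrow> q \<le> prob {\<omega>\<in>space M. Y t \<omega> \<in> B}" and k: "1 \<le> k"
  shows "prob {\<omega>\<in>space M. card {t\<in>I. Y t \<omega> \<in> B} < k}
        \<le> exp (s * (real k - 1) - real (card I) * q * (1 - exp (- s)))"
proof -
  have sub: "{\<omega>\<in>space M. card {t\<in>I. Y t \<omega> \<in> B} < k}
      \<subseteq> {\<omega>\<in>space M. exp (- s * (real k - 1)) \<le> exp (- s) ^ card {t\<in>I. Y t \<omega> \<in> B}}"
  proof safe
    fix \<omega> assume "card {t\<in>I. Y t \<omega> \<in> B} < k"
    then have "- s * (real k - 1) \<le> - s * card {t\<in>I. Y t \<omega> \<in> B}"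
      using s k by (intro mult_left_mono_neg) linarith+
    then show "exp (- s * (real k - 1)) \<le> exp (- s) ^ card {t\<in>I. Y t \<omega> \<in> B}"
      by (simp add: exp_of_nat_mult[symmetric] mult.commute)
  qed
  note Markov = indep_count_Markov[OF I ind B, of "exp (- s * (real k - 1))" "exp (- s)"]
  have "prob {\<omega>\<in>space M. card {t\<in>I. Y t \<omega> \<in> B} < k}
      \<le> (\<Prod>t\<in>I. 1 + prob {\<omega>\<in>space M. Y t \<omega> \<in> B} * (exp (- s) - 1)) / exp (- s * (real k - 1))"
    by (intro order_trans[OF finite_measure_mono[OF sub Markov(1)] Markov(2)]) simp_all
  also have "\<dots> \<le> (\<Prod>t\<in>I. exp (- q * (1 - exp (- s)))) / exp (- s * (real k - 1))"
  proof (intro divide_right_mono prod_mono conjI)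
    fix t assume "t \<in> I"
    have es: "0 \<le> 1 - exp (- s)" "1 - exp (- s) \<le> 1" using s by auto
    show "0 \<le> 1 + prob {\<omega>\<in>space M. Y t \<omega> \<in> B} * (exp (- s) - 1)"
      using mult_mono[OF prob_le_1[of "{\<omega>\<in>space M. Y t \<omega> \<in> B}"] es(2)] es
      by (simp add: algebra_simps)
    have "1 + prob {\<omega>\<in>space M. Y t \<omega> \<in> B} * (exp (- s) - 1) \<le> 1 + (- q * (1 - exp (- s)))"
      using mult_right_mono[OF q[OF \<open>t \<in> I\<close>] es(1)] by (simp add: algebra_simps)
    also have "\<dots> \<le> exp (- q * (1 - exp (- s)))" by (rule exp_ge_add_one_self[THEN order_trans[rotated]]) simp
    finally show "1 + prob {\<omega>\<in>space M. Y t \<omega> \<in> B} * (exp (- s) - 1) \<le> exp (- q * (1 - exp (- s)))" .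
  qed simp
  also have "\<dots> = exp (- real (card I) * q * (1 - exp (- s))) / exp (- s * (real k - 1))"
    by (simp add: exp_of_nat_mult[symmetric] mult.assoc)
  also have "\<dots> = exp (s * (real k - 1) - real (card I) * q * (1 - exp (- s)))"
    by (simp add: exp_diff exp_minus divide_inverse mult_ac)
  finally show ?thesis .
qed

lemma (in prob_space) indep_sets_reindex:
  assumes inj: "inj_on f I" and ind: "indep_sets F (f ` I)"
  shows "indep_sets (\<lambda>i. F (f i)) I"
  unfolding indep_sets_def
proof (intro conjI ballI allI impI)
  fix i assume "i \<in> I"
  then show "F (f i) \<subseteq> events" using ind unfolding indep_sets_def by auto
next
  fix J A assume J: "J \<subseteq> I" "J \<noteq> {}" "finite J" and A: "A \<in> Pi J (\<lambda>i. F (f i))"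
  define A' where "A' = (\<lambda>y. A (inv_into J f y))"
  have injJ: "inj_on f J" using inj J(1) by (rule inj_on_subset)
  have A'f: "\<And>j. j \<in> J \<Longrightarrow> A' (f j) = A j" unfolding A'_def using injJ by simp
  have "A' \<in> Pi (f ` J) F" using A A'f by auto
  moreover have "f ` J \<subseteq> f ` I" "f ` J \<noteq> {}" "finite (f ` J)" using J by auto
  ultimately have "prob (\<Inter>y\<in>f ` J. A' y) = (\<Prod>y\<in>f ` J. prob (A' y))"
    using ind unfolding indep_sets_def by blast
  moreover have "(\<Inter>y\<in>f ` J. A' y) = (\<Inter>j\<in>J. A j)" using A'f by auto
  moreover have "(\<Prod>y\<in>f ` J. prob (A' y)) = (\<Prod>j\<in>J. prob (A j))"
    using prod.reindex[OF injJ, of "\<lambda>y. prob (A' y)"] A'f by simp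
  ultimately show "prob (\<Inter>j\<in>J. A j) = (\<Prod>j\<in>J. prob (A j))" by simp
qed

lemma (in prob_space) indep_vars_row:
  fixes X :: "'i \<Rightarrow> 'j \<Rightarrow> 'a \<Rightarrow> 'b"
  assumes ind: "indep_vars (\<lambda>_. N) (\<lambda>(i, k). X i k) (I \<times> UNIV)" and i: "i \<in> I"
  shows "indep_vars (\<lambda>_. N) (X i) J"
proof -
  have "indep_vars (\<lambda>_. N) (\<lambda>(i, k). X i k) (Pair i ` J)"
    by (rule indep_vars_subset[OF ind]) (use i in auto)
  then have rv: "\<forall>k\<in>J. random_variable N (X i k)"
    and "indep_sets (\<lambda>y. {(\<lambda>(i, k). X i k) y -` A \<inter> space M | A. A \<in> sets N}) (Pair i ` J)"
    unfolding indep_vars_def2 by auto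
  then have "indep_sets (\<lambda>k. {X i k -` A \<inter> space M | A. A \<in> sets N}) J"
    using indep_sets_reindex[of "Pair i" J] by (fastforce simp: inj_on_def)
  then show ?thesis unfolding indep_vars_def2 using rv by auto
qed

section \<open>Concentration of empirical quantiles\<close>

text \<open>The number \<open>n (1 - \<tau>)\<close> of samples per unit of the exponent \<open>T\<close> which, by the
  Chernoff bounds below, pins the empirical \<open>\<tau>\<close>-quantile of an IHR arm with hazard rate
  at least \<open>L\<close> to within \<open>x / L\<close> of the true quantile.\<close>
definition quantile_cost :: "real \<Rightarrow> real \<Rightarrow> real" where
  "quantile_cost \<tau> x = 8 * (1 + \<tau>) / ((1 - \<tau>) * x\<^sup>2) + 16 / (3 * x)"

lemma exp_mult_sub_one_ge:
  assumes "0 \<le> (x::real)"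
  shows "x\<^sup>2 / 2 \<le> exp x * (x - 1) + 1"
proof -
  define h where "h = (\<lambda>x::real. exp x * (x - 1) + 1 - x\<^sup>2 / 2)"
  have "h 0 \<le> h x"
  proof (rule DERIV_nonneg_imp_nondecreasing[OF assms])
    fix t :: real assume "0 \<le> t"
    have "(h has_real_derivative (t * exp t - t)) (at t)"
      unfolding h_def by (auto intro!: derivative_eq_intros simp: algebra_simps power2_eq_square)
    moreover have "t \<le> t * exp t" using \<open>0 \<le> t\<close> mult_left_mono[of 1 "exp t" t] by simp
    ultimately show "\<exists>y. DERIV h t :> y \<and> 0 \<le> y" by auto
  qed
  then show ?thesis unfolding h_def by simp
qed

lemma chernoff_upper_exponent_le:
  fixes x \<tau> \<nu> T k :: real
  assumes x: "0 < x" and tau: "0 < \<tau>" "\<tau> < 1" and small: "exp (4 * x) * (1 - \<tau>) \<le> 1"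
    and T: "2 \<le> T" "T * quantile_cost \<tau> x \<le> \<nu>" and k: "\<nu> - 1 \<le> k"
  shows "- x * k + \<nu> * (1 - exp (- x)) \<le> - T"
proof -
  define D where "D = quantile_cost \<tau> x"
  define g where "g = x - 1 + exp (- x)"
  have D0: "0 < D" unfolding D_def quantile_cost_def using x tau by (intro add_pos_pos) auto
  have "exp (4 * x) \<le> 1 / (1 - \<tau>)" using small tau by (simp add: le_divide_eq)
  then have "8 * exp (4 * x) / x\<^sup>2 \<le> 8 / (1 - \<tau>) / x\<^sup>2"
    by (intro divide_right_mono) auto
  also have "\<dots> = 8 / ((1 - \<tau>) * x\<^sup>2)" by simp
  also have "\<dots> \<le> D" unfolding D_def quantile_cost_def using x tau
    by (intro add_increasing2) (auto intro!: divide_right_mono)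
  finally have eD: "8 * exp (4 * x) / x\<^sup>2 \<le> D" .
  have g: "x\<^sup>2 * exp (- x) / 2 \<le> g"
    using mult_right_mono[OF exp_mult_sub_one_ge[of x], of "exp (- x)"] x
    by (simp add: g_def algebra_simps exp_minus)
  have "exp (3 * x) = exp (- x) * exp (4 * x)" by (simp flip: exp_add)
  then have "4 * exp (3 * x) = (8 * exp (4 * x) / x\<^sup>2) * (x\<^sup>2 * exp (- x) / 2)"
    using x by (simp add: field_simps power2_eq_square)
  also have "\<dots> \<le> D * g" using eD g x D0 by (intro mult_mono) auto
  finally have "4 * exp (3 * x) \<le> D * g" .
  moreover have "1 + 3 * x \<le> exp (3 * x)" using exp_ge_add_one_self[of "3 * x"] by simp
  ultimately have Dg: "1 + x / 2 \<le> D * g" using x by linarith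
  have TD: "T \<le> \<nu> / D" using T D0 unfolding D_def[symmetric] by (simp add: le_divide_eq)
  have "T + x \<le> \<nu> / D * (1 + x / 2)"
    using mult_right_mono[OF order_trans[OF T(1) TD], of "x / 2"] TD x by (simp add: algebra_simps)
  also have "\<dots> \<le> \<nu> / D * (D * g)" using Dg TD T by (intro mult_left_mono) auto
  also have "\<dots> = \<nu> * g" using D0 by simp
  finally have "T + x \<le> \<nu> * g" .
  moreover have "- x * k \<le> - x * (\<nu> - 1)" using k x by simp
  ultimately show ?thesis unfolding g_def by (simp add: algebra_simps)
qed

lemma chernoff_lower_exponent_le:
  fixes x \<tau> \<nu> T k :: real
  assumes x: "0 < x" and tau: "0 < \<tau>" "\<tau> < 1"
    and T: "0 \<le> T" "T * quantile_cost \<tau> x \<le> \<nu>" and k: "k - 1 \<le> \<nu>"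
  shows "x * (k - 1) - \<nu> * (exp x - 1) \<le> - T"
proof -
  have "8 / x\<^sup>2 \<le> quantile_cost \<tau> x"
    unfolding quantile_cost_def using x tau
    by (intro add_increasing2) (auto simp: field_simps)
  then have T8: "T * (8 / x\<^sup>2) \<le> \<nu>" using T by (meson mult_left_mono order_trans)
  moreover have "0 \<le> T * (8 / x\<^sup>2)" using T by simp
  ultimately have "0 \<le> \<nu>" by linarith
  have "T \<le> \<nu> * x\<^sup>2 / 8" using T8 x by (simp add: field_simps)
  moreover have "\<nu> * (x + x\<^sup>2 / 2) \<le> \<nu> * (exp x - 1)"
    using exp_lower_Taylor_quadratic[of x] x \<open>0 \<le> \<nu>\<close> by (intro mult_left_mono) auto
  moreover have "x * (k - 1) \<le> x * \<nu>" using k x by simp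
  moreover have "0 \<le> \<nu> * x\<^sup>2" using \<open>0 \<le> \<nu>\<close> by simp
  ultimately show ?thesis by (simp add: algebra_simps)
qed

lemma (in prob_space) prob_eq_distr_measure:
  assumes "random_variable borel Y" "distr M borel Y = D" "B \<in> sets borel"
  shows "prob {\<omega>\<in>space M. Y \<omega> \<in> B} = measure D B"
proof -
  have "measure D B = measure M (Y -` B \<inter> space M)"
    using measure_distr[OF assms(1) assms(3)] assms(2) by simp
  also have "Y -` B \<inter> space M = {\<omega>\<in>space M. Y \<omega> \<in> B}" by auto
  finally show ?thesis by simp
qed

context prob_space
begin

context
  fixes g :: "real \<Rightarrow> real" and Y :: "nat \<Rightarrow> 'a \<Rightarrow> real" and n :: nat
    and \<tau> L \<delta> T :: real
  assumes g: "IHR g" and ind: "indep_vars (\<lambda>_. borel) Y {..<n}"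
    and distr: "\<And>t. t < n \<Longrightarrow> distr M borel (Y t) = dens_meas g"
    and n: "1 \<le> n" and tau: "0 < \<tau>" "\<tau> < 1" and L: "0 < L" "L \<le> hazard_lb g"
    and \<delta>: "0 < \<delta>" and small: "exp (4 * (L * \<delta>)) * (1 - \<tau>) \<le> 1"
    and T: "2 \<le> T" "T * quantile_cost \<tau> (L * \<delta>) \<le> real n * (1 - \<tau>)"
begin

lemma prob_sample_in:
  assumes "t < n" "B \<in> sets borel"
  shows "prob {\<omega>\<in>space M. Y t \<omega> \<in> B} = measure (dens_meas g) B"
  using prob_eq_distr_measure[OF _ distr assms(2)] ind assms(1) unfolding indep_vars_def by auto

lemma emp_quantile_upper_deviation:
  "prob {\<omega>\<in>space M. quantile g \<tau> + \<delta> \<le> emp_quantile \<tau> (map (\<lambda>t. Y t \<omega>) [0..<n])} \<le> exp (- T)"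
proof -
  define x where "x = L * \<delta>"
  have "x > 0" unfolding x_def using L \<delta> by simp
  have "prob {\<omega>\<in>space M. quantile g \<tau> + \<delta> \<le> emp_quantile \<tau> (map (\<lambda>t. Y t \<omega>) [0..<n])}
      = prob {\<omega>\<in>space M. emp_rank \<tau> n \<le> card {t\<in>{..<n}. Y t \<omega> \<in> {quantile g \<tau> + \<delta>..}}}"
    using emp_quantile_ge_iff[of \<tau> n] tau n by simp
  also have "\<dots> \<le> exp (- x * emp_rank \<tau> n + real (card {..<n}) * ((1 - \<tau>) * exp (- x)) * (exp x - 1))"
  proof (rule chernoff_count_upper[OF _ ind])
    fix t assume "t \<in> {..<n}"
    then show "prob {\<omega>\<in>space M. Y t \<omega> \<in> {quantile g \<tau> + \<delta>..}} \<le> (1 - \<tau>) * exp (- x)"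
      using prob_sample_in[of t "{quantile g \<tau> + \<delta>..}"] IHR_upper_tail[OF g tau, of \<delta> L] \<delta> L
      by (simp add: x_def)
  qed (use \<open>x > 0\<close> in auto)
  also have "\<dots> = exp (- x * emp_rank \<tau> n + real n * (1 - \<tau>) * (1 - exp (- x)))"
    by (simp add: algebra_simps exp_minus field_simps)
  also have "\<dots> \<le> exp (- T)"
    using chernoff_upper_exponent_le[OF \<open>x > 0\<close> tau small[folded x_def] T(1) T(2)[folded x_def]]
      emp_rank_bounds[of \<tau> n] tau n
    by simp
  finally show ?thesis .
qed

lemma emp_quantile_lower_deviation:
  "prob {\<omega>\<in>space M. emp_quantile \<tau> (map (\<lambda>t. Y t \<omega>) [0..<n]) \<le> quantile g \<tau> - \<delta>} \<le> exp (- T)"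
proof -
  define x where "x = L * \<delta>"
  have "x > 0" unfolding x_def using L \<delta> by simp
  have "exp x * (1 - \<tau>) \<le> exp (4 * x) * (1 - \<tau>)"
    using \<open>x > 0\<close> tau by (intro mult_right_mono) auto
  then have "(1 - \<tau>) * exp x \<le> 1" using small by (simp add: x_def mult.commute)
  have "prob {\<omega>\<in>space M. emp_quantile \<tau> (map (\<lambda>t. Y t \<omega>) [0..<n]) \<le> quantile g \<tau> - \<delta>}
      = prob {\<omega>\<in>space M. card {t\<in>{..<n}. Y t \<omega> \<in> {quantile g \<tau> - \<delta><..}} < emp_rank \<tau> n}"
    using emp_quantile_le_iff[of \<tau> n] tau n by simp
  also have "\<dots> \<le> exp (x * (real (emp_rank \<tau> n) - 1) - real (card {..<n}) * ((1 - \<tau>) * exp x) * (1 - exp (- x)))"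
  proof (rule chernoff_count_lower[OF _ ind])
    fix t assume "t \<in> {..<n}"
    then show "(1 - \<tau>) * exp x \<le> prob {\<omega>\<in>space M. Y t \<omega> \<in> {quantile g \<tau> - \<delta><..}}"
      using prob_sample_in[of t "{quantile g \<tau> - \<delta><..}"] IHR_lower_tail[OF g tau, of \<delta> L] \<delta> L \<open>(1 - \<tau>) * exp x \<le> 1\<close>
      by (simp add: x_def)
  qed (use \<open>x > 0\<close> emp_rank_bounds[of \<tau> n] tau n in auto)
  also have "\<dots> = exp (x * (real (emp_rank \<tau> n) - 1) - real n * (1 - \<tau>) * (exp x - 1))"
    by (simp add: algebra_simps exp_minus field_simps)
  also have "\<dots> \<le> exp (- T)"
    using chernoff_lower_exponent_le[OF \<open>x > 0\<close> tau _ T(2)[folded x_def]] emp_rank_bounds[of \<tau> n] T tau n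
    by simp
  finally show ?thesis .
qed


lemma emp_quantile_deviation:
  "prob ({\<omega>\<in>space M. quantile g \<tau> + \<delta> \<le> emp_quantile \<tau> (map (\<lambda>t. Y t \<omega>) [0..<n])}
      \<union> {\<omega>\<in>space M. emp_quantile \<tau> (map (\<lambda>t. Y t \<omega>) [0..<n]) \<le> quantile g \<tau> - \<delta>})
    \<le> 2 * exp (- T)"
proof -
  let ?q = "\<lambda>\<omega>. emp_quantile \<tau> (map (\<lambda>t. Y t \<omega>) [0..<n])"
  have "?q \<in> borel_measurable M"
    using ind tau by (intro borel_measurable_emp_quantile) (auto simp: indep_vars_def)
  then have "{\<omega>\<in>space M. quantile g \<tau> + \<delta> \<le> ?q \<omega>} \<in> events"
    and "{\<omega>\<in>space M. ?q \<omega> \<le> quantile g \<tau> - \<delta>} \<in> events"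
    by measurable
  from measure_Un_le[OF this] show ?thesis
    using emp_quantile_upper_deviation emp_quantile_lower_deviation by simp
qed

end

end

section \<open>Gaps\<close>

lemma sorted_gap_mem:
  assumes "1 \<le> j" "j \<le> K"
  shows "\<exists>i\<in>{1..K}. sorted_gap K Q S j = gap K Q S i"
proof -
  have "sorted_gap K Q S j \<in> set (sort (map (gap K Q S) [1..<K+1]))"
    unfolding sorted_gap_def using assms by (intro nth_mem) auto
  then show ?thesis by auto
qed

lemma gap_pos:
  fixes Q :: "nat \<Rightarrow> real"
  assumes S: "S \<subseteq> {1..K}" "S \<noteq> {}" "{1..K} - S \<noteq> {}"
    and sep: "\<forall>i\<in>S. \<forall>j\<in>{1..K} - S. Q j < Q i" and i: "i \<in> {1..K}"
  shows "0 < gap K Q S i"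
proof (cases "i \<in> S")
  case True
  have "Max (Q ` ({1..K} - S)) \<in> Q ` ({1..K} - S)" using S by (intro Max_in) auto
  then show ?thesis using True sep unfolding gap_def by auto
next
  case False
  have "Min (Q ` S) \<in> Q ` S" using S finite_subset[OF S(1)] by (intro Min_in) auto
  then show ?thesis using False sep i unfolding gap_def by auto
qed

lemma sorted_gap_pos:
  fixes Q :: "nat \<Rightarrow> real"
  assumes "S \<subseteq> {1..K}" "S \<noteq> {}" "{1..K} - S \<noteq> {}"
    and "\<forall>i\<in>S. \<forall>j\<in>{1..K} - S. Q j < Q i" and "1 \<le> j" "j \<le> K"
  shows "0 < sorted_gap K Q S j"
  using sorted_gap_mem[of j K Q S] gap_pos[OF assms(1-4)] assms(5,6) by auto

lemma sorted_gap_le_quantile: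
  fixes Q :: "nat \<Rightarrow> real"
  assumes S: "S \<subseteq> {1..K}" "S \<noteq> {}" "{1..K} - S \<noteq> {}"
    and Q: "\<And>i. i \<in> {1..K} \<Longrightarrow> 0 \<le> Q i" and j: "1 \<le> j" "j \<le> K"
  shows "\<exists>k\<in>{1..K}. sorted_gap K Q S j \<le> Q k"
proof -
  obtain i where i: "i \<in> {1..K}" "sorted_gap K Q S j = gap K Q S i"
    using sorted_gap_mem[OF j] by blast
  show ?thesis
  proof (cases "i \<in> S")
    case True
    have "Max (Q ` ({1..K} - S)) \<in> Q ` ({1..K} - S)" using S by (intro Max_in) auto
    then show ?thesis using True i Q unfolding gap_def by force
  next
    case False
    have "Min (Q ` S) \<in> Q ` S" using S finite_subset[OF S(1)] by (intro Min_in) auto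
    then show ?thesis using False i Q S unfolding gap_def by force
  qed
qed

lemma length_filter_less_sorted_nth:
  fixes ss :: "'a::linorder list"
  assumes "sorted ss" "j < length ss"
  shows "length (filter (\<lambda>y. y < ss ! j) ss) \<le> j"
proof -
  have "k < j" if "k < length ss" "ss ! k < ss ! j" for k
  proof (rule ccontr)
    assume "\<not> k < j"
    then have "ss ! j \<le> ss ! k" using sorted_nth_mono[OF assms(1)] that(1) by simp
    then show False using that(2) by simp
  qed
  then have "{k. k < length ss \<and> ss ! k < ss ! j} \<subseteq> {..<j}" by blast
  then have "card {k. k < length ss \<and> ss ! k < ss ! j} \<le> j"
    using card_mono[of "{..<j}"] by fastforce
  then show ?thesis by (simp add: length_filter_conv_card)
qed

lemma sorted_gap_le_gap_in_subset:
  assumes A: "A \<subseteq> {1..K}" "card A = r" "1 \<le> r"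
  shows "\<exists>i\<in>A. sorted_gap K Q S r \<le> gap K Q S i"
proof (rule ccontr)
  assume none: "\<not> ?thesis"
  let ?small = "\<lambda>y. y < sorted_gap K Q S r"
  have "A \<subseteq> {i. ?small (gap K Q S i)} \<inter> set [1..<K+1]"
    using A(1) none by force
  then have "r \<le> card ({i. ?small (gap K Q S i)} \<inter> set [1..<K+1])"
    using A(2) by (metis card_mono finite_Int finite_set)
  also have "\<dots> = length (filter ?small (sort (map (gap K Q S) [1..<K+1])))"
    by (simp add: filter_sort filter_map distinct_length_filter)
  also have "\<dots> \<le> r - 1"
    unfolding sorted_gap_def
    by (rule length_filter_less_sorted_nth) (use A card_mono[OF _ A(1)] in auto)
  finally show False using A by simp
qed

section \<open>Correctness of Q-SAR under accurate estimates\<close>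

text \<open>A phase of Q-SAR whose estimates are accurate to a quarter of the largest active gap.\<close>
locale sar_phase =
  fixes K :: nat and Q w :: "nat \<Rightarrow> real" and S A :: "nat set" and as :: "nat list"
    and \<delta> :: real and l :: nat
  assumes S: "S \<subseteq> {1..K}" "S \<noteq> {}" "{1..K} - S \<noteq> {}"
    and sep: "\<forall>i\<in>S. \<forall>j\<in>{1..K} - S. Q j < Q i"
    and A: "A \<subseteq> {1..K}"
    and as: "distinct as" "set as = A" "sorted (map (\<lambda>i. - w i) as)"
    and close: "\<And>i. i \<in> A \<Longrightarrow> \<bar>w i - Q i\<bar> < \<delta>"
    and wide: "\<exists>i\<in>A. 4 * \<delta> \<le> gap K Q S i"
    and l: "l = card (S \<inter> A)" "1 \<le> l" "l < length as"
begin

definition min_best :: real where "min_best = Min (Q ` S)"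
definition max_rest :: real where "max_rest = Max (Q ` ({1..K} - S))"

lemma finite_A: "finite A"
  using A finite_subset by blast

lemma min_best_le: "s \<in> S \<Longrightarrow> min_best \<le> Q s"
  unfolding min_best_def using S(1) by (intro Min_le) (auto intro: finite_subset)

lemma le_max_rest: "c \<in> {1..K} - S \<Longrightarrow> Q c \<le> max_rest"
  unfolding max_rest_def by auto

lemma max_rest_less_min_best: "max_rest < min_best"
proof -
  have "min_best \<in> Q ` S" unfolding min_best_def using S finite_subset by (intro Min_in) auto
  moreover have "max_rest \<in> Q ` ({1..K} - S)" unfolding max_rest_def using S by (intro Max_in) auto
  ultimately show ?thesis using sep by auto
qed

lemma gap_best: "s \<in> S \<Longrightarrow> gap K Q S s = Q s - max_rest"
  unfolding gap_def max_rest_def by simp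

lemma gap_rest: "c \<notin> S \<Longrightarrow> gap K Q S c = min_best - Q c"
  unfolding gap_def min_best_def by simp

lemma w_nth_antimono: "i \<le> j \<Longrightarrow> j < length as \<Longrightarrow> w (as ! j) \<le> w (as ! i)"
  using sorted_nth_mono[OF as(3), of i j] by simp

lemma nth_in_A: "k < length as \<Longrightarrow> as ! k \<in> A"
  using as(2) nth_mem by blast

lemma w_le_first: "a \<in> A \<Longrightarrow> w a \<le> w (as ! 0)"
  using as(2) w_nth_antimono by (auto simp: in_set_conv_nth)

lemma last_le_w: "a \<in> A \<Longrightarrow> w (as ! (length as - 1)) \<le> w a"
  using as(2) w_nth_antimono by (auto simp: in_set_conv_nth)

lemma w_nth_greater:
  assumes k: "k < length as" and c: "k + 1 \<le> card {a\<in>A. v < w a}"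
  shows "v < w (as ! k)"
proof (rule ccontr)
  assume below: "\<not> v < w (as ! k)"
  have "{a\<in>A. v < w a} \<subseteq> (\<lambda>i. as ! i) ` {..<k}"
  proof
    fix a assume a: "a \<in> {a\<in>A. v < w a}"
    then obtain i where i: "i < length as" "a = as ! i" using as(2) by (auto simp: in_set_conv_nth)
    have "i < k"
    proof (rule ccontr)
      assume "\<not> i < k"
      then have "w (as ! i) \<le> w (as ! k)" using w_nth_antimono i by simp
      then show False using a i below by auto
    qed
    then show "a \<in> (\<lambda>i. as ! i) ` {..<k}" using i by auto
  qed
  then have "card {a\<in>A. v < w a} \<le> card ((\<lambda>i. as ! i) ` {..<k})"
    by (intro card_mono) auto
  also have "\<dots> \<le> k" using card_image_le[of "{..<k}" "\<lambda>i. as ! i"] by simp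
  finally show False using c by simp
qed

lemma w_nth_less:
  assumes k: "k < length as" and c: "length as - k \<le> card {a\<in>A. w a < v}"
  shows "w (as ! k) < v"
proof (rule ccontr)
  assume above: "\<not> w (as ! k) < v"
  have "{a\<in>A. w a < v} \<subseteq> (\<lambda>i. as ! i) ` {k+1..<length as}"
  proof
    fix a assume a: "a \<in> {a\<in>A. w a < v}"
    then obtain i where i: "i < length as" "a = as ! i" using as(2) by (auto simp: in_set_conv_nth)
    have "k < i"
    proof (rule ccontr)
      assume "\<not> k < i"
      then have "w (as ! k) \<le> w (as ! i)" using w_nth_antimono i k by simp
      then show False using a i above by auto
    qed
    then show "a \<in> (\<lambda>i. as ! i) ` {k+1..<length as}" using i by auto
  qed
  then have "card {a\<in>A. w a < v} \<le> card ((\<lambda>i. as ! i) ` {k+1..<length as})"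
    by (intro card_mono) auto
  also have "\<dots> \<le> length as - (k + 1)"
    using card_image_le[of "{k+1..<length as}" "\<lambda>i. as ! i"] by simp
  finally show False using c k by simp
qed

lemma accept_two_le:
  assumes "w (as ! (l - 1)) - w (as ! (length as - 1)) < w (as ! 0) - w (as ! l)"
  shows "2 \<le> l"
proof (rule ccontr)
  assume "\<not> 2 \<le> l"
  then have "l = 1" using l by simp
  moreover have "w (as ! (length as - 1)) \<le> w (as ! 1)"
    using w_nth_antimono l \<open>l = 1\<close> by simp
  ultimately show False using assms by simp
qed

text \<open>Accepting the top arm is safe: otherwise the \<open>l\<close> optimal active arms and the top
  arm all have estimates above \<open>min_best - \<delta>\<close>, while the widest-gap arm is suboptimal
  and sits far below; then the worst-side difference exceeds the best-side one.\<close>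
lemma accept_in_best:
  assumes "w (as ! (l - 1)) - w (as ! (length as - 1)) < w (as ! 0) - w (as ! l)"
  shows "as ! 0 \<in> S"
proof (rule ccontr)
  assume a1: "as ! 0 \<notin> S"
  have a1A: "as ! 0 \<in> A" using nth_in_A[of 0] l by force
  have Qa1: "Q (as ! 0) \<le> max_rest" using a1 a1A A le_max_rest by auto
  obtain istar where ist: "istar \<in> A" "4 * \<delta> \<le> gap K Q S istar" using wide by blast
  have "istar \<notin> S"
  proof
    assume "istar \<in> S"
    then have "max_rest + 4 * \<delta> \<le> Q istar" using ist gap_best by fastforce
    then show False using w_le_first[OF ist(1)] close[OF ist(1)] close[OF a1A] Qa1 by auto
  qed
  then have Qist: "Q istar \<le> min_best - 4 * \<delta>" using ist gap_rest by fastforce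
  have above: "min_best - \<delta> < w s" if "s \<in> S \<inter> A" for s
    using close[of s] min_best_le[of s] that by (auto simp: abs_less_iff)
  have "S \<inter> A \<noteq> {}" using l by auto
  then obtain s0 where s0: "s0 \<in> S \<inter> A" by blast
  have "min_best - \<delta> < w (as ! 0)" using above[OF s0] w_le_first[of s0] s0 by force
  then have "insert (as ! 0) (S \<inter> A) \<subseteq> {a\<in>A. min_best - \<delta> < w a}"
    using above a1A by blast
  then have "card (insert (as ! 0) (S \<inter> A)) \<le> card {a\<in>A. min_best - \<delta> < w a}"
    by (rule card_mono[rotated]) (use finite_A in auto)
  then have c: "l + 1 \<le> card {a\<in>A. min_best - \<delta> < w a}"
    using a1 l finite_A by simp
  have "min_best - \<delta> < w (as ! l)" "min_best - \<delta> < w (as ! (l - 1))"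
    using w_nth_greater[of l] w_nth_greater[of "l - 1"] c l by simp_all
  moreover have "w (as ! (length as - 1)) < min_best - 3 * \<delta>"
    using last_le_w[OF ist(1)] close[OF ist(1)] Qist by auto
  moreover have "w (as ! 0) < max_rest + \<delta>" using close[OF a1A] Qa1 by auto
  ultimately show False using assms max_rest_less_min_best by auto
qed

lemma reject_not_best:
  assumes "\<not> w (as ! (l - 1)) - w (as ! (length as - 1)) < w (as ! 0) - w (as ! l)"
  shows "as ! (length as - 1) \<notin> S"
proof
  assume ar: "as ! (length as - 1) \<in> S"
  have arA: "as ! (length as - 1) \<in> A" using nth_in_A[of "length as - 1"] l by simp
  have Qar: "min_best \<le> Q (as ! (length as - 1))" using ar min_best_le by simp
  obtain istar where ist: "istar \<in> A" "4 * \<delta> \<le> gap K Q S istar" using wide by blast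
  have "istar \<in> S"
  proof (rule ccontr)
    assume "istar \<notin> S"
    then have "Q istar + 4 * \<delta> \<le> min_best" using ist gap_rest by fastforce
    then show False using last_le_w[OF ist(1)] close[OF ist(1)] close[OF arA] Qar by auto
  qed
  then have Qist: "max_rest + 4 * \<delta> \<le> Q istar" using ist gap_best by fastforce
  have "card (A - S) = length as - l"
    using card_Diff_subset[of "S \<inter> A" A] finite_A l distinct_card[OF as(1)] as(2)
    by (simp add: Diff_Int Int_commute)
  then have "0 < card (A - S)" using l by simp
  then have "A - S \<noteq> {}" by (simp add: card_gt_0_iff)
  then obtain c0 where c0: "c0 \<in> A - S" by blast
  have below: "w c < max_rest + \<delta>" if "c \<in> A - S" for c
    using close[of c] le_max_rest[of c] that A by (auto simp: abs_less_iff)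
  have "w (as ! (length as - 1)) < max_rest + \<delta>"
    using below[OF c0] last_le_w[of c0] c0 by force
  then have "insert (as ! (length as - 1)) (A - S) \<subseteq> {a\<in>A. w a < max_rest + \<delta>}"
    using below arA by blast
  then have "card (insert (as ! (length as - 1)) (A - S)) \<le> card {a\<in>A. w a < max_rest + \<delta>}"
    by (rule card_mono[rotated]) (use finite_A in auto)
  then have c: "length as - l + 1 \<le> card {a\<in>A. w a < max_rest + \<delta>}"
    using ar finite_A \<open>card (A - S) = length as - l\<close> by simp
  have "w (as ! l) < max_rest + \<delta>" "w (as ! (l - 1)) < max_rest + \<delta>"
    using w_nth_less[of l] w_nth_less[of "l - 1"] c l by simp_all
  moreover have "max_rest + 3 * \<delta> < w (as ! 0)"
    using w_le_first[OF ist(1)] close[OF ist(1)] Qist by auto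
  moreover have "min_best - \<delta> < w (as ! (length as - 1))" using close[OF arA] Qar by auto
  ultimately show False using assms max_rest_less_min_best by auto
qed

end

text \<open>\<open>l\<close> is the paper's \<open>l\<^sub>p\<close>, the number of arms still to be accepted.\<close>
definition qsar_invariant :: "nat \<Rightarrow> nat set \<Rightarrow> nat \<Rightarrow> nat set \<times> nat set \<times> nat \<Rightarrow> bool" where
  "qsar_invariant K S p st = (case st of (A, Acc, l) \<Rightarrow> A \<subseteq> {1..K} \<and> card A = K - p \<and> Acc \<subseteq> S
     \<and> A \<inter> Acc = {} \<and> S \<subseteq> A \<union> Acc \<and> l = card (S \<inter> A) \<and> 1 \<le> l)"

lemma qsar_invariant_accept:
  assumes "qsar_invariant K S p (A, Acc, l)" "a \<in> A" "a \<in> S" "2 \<le> l"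
  shows "qsar_invariant K S (Suc p) (A - {a}, Acc \<union> {a}, l - 1)"
proof -
  have "finite A" using assms(1) unfolding qsar_invariant_def by (auto intro: finite_subset)
  moreover have "S \<inter> (A - {a}) = (S \<inter> A) - {a}" by auto
  ultimately have "card (S \<inter> (A - {a})) = card (S \<inter> A) - 1" using assms(2,3) by simp
  then show ?thesis using assms unfolding qsar_invariant_def by auto
qed

lemma qsar_invariant_reject:
  assumes "qsar_invariant K S p (A, Acc, l)" "a \<in> A" "a \<notin> S"
  shows "qsar_invariant K S (Suc p) (A - {a}, Acc, l)"
proof -
  have "finite A" using assms(1) unfolding qsar_invariant_def by (auto intro: finite_subset)
  moreover have "S \<inter> (A - {a}) = S \<inter> A" using assms by auto
  ultimately show ?thesis using assms unfolding qsar_invariant_def by auto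
qed

lemma qsar_phase_invariant:
  fixes Q :: "nat \<Rightarrow> real" and q :: "nat \<Rightarrow> nat \<Rightarrow> real"
  assumes S: "S \<subseteq> {1..K}" "S \<noteq> {}" "{1..K} - S \<noteq> {}"
    and sep: "\<forall>i\<in>S. \<forall>j\<in>{1..K} - S. Q j < Q i"
    and inv: "qsar_invariant K S p (A, Acc, l)" and p: "p + 2 \<le> K"
    and close: "\<forall>i\<in>{1..K}. \<bar>q i (n_phase N K (Suc p)) - Q i\<bar> < sorted_gap K Q S (K - p) / 4"
  shows "qsar_invariant K S (Suc p) (qsar_phase N K q (Suc p) (A, Acc, l))"
proof -
  define w where "w = (\<lambda>i. q i (n_phase N K (Suc p)))"
  define as where "as = sort_key (\<lambda>i. - w i) (sorted_list_of_set A)"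
  have AK: "A \<subseteq> {1..K}" and cA: "card A = K - p" and l: "l = card (S \<inter> A)" "1 \<le> l"
    using inv unfolding qsar_invariant_def by auto
  have fA: "finite A" using AK finite_subset by blast
  have as: "distinct as" "set as = A" "sorted (map (\<lambda>i. - w i) as)"
    unfolding as_def using fA by auto
  have len: "length as = card A" using distinct_card[OF as(1)] as(2) by simp
  have step: "qsar_phase N K q (Suc p) (A, Acc, l) =
     (if length as \<le> l then (A - {as ! 0}, Acc \<union> {as ! 0}, l - 1)
      else if w (as ! (l - 1)) - w (as ! (length as - 1)) < w (as ! 0) - w (as ! l)
           then (A - {as ! 0}, Acc \<union> {as ! 0}, l - 1) else (A - {as ! (length as - 1)}, Acc, l))"
    using l by (simp add: qsar_phase_def Let_def w_def as_def)
  have as0: "as ! 0 \<in> A" "as ! (length as - 1) \<in> A"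
    using nth_mem[of _ as] as(2) len cA p by auto
  show ?thesis
  proof (cases "length as \<le> l")
    case True
    have "S \<inter> A = A"
      using True l len fA by (metis Int_lower2 card_mono card_subset_eq finite_Int le_antisym)
    moreover have "2 \<le> l" using True len cA p by simp
    ultimately show ?thesis
      using step True qsar_invariant_accept[OF inv as0(1)] as0 by auto
  next
    case False
    interpret sar_phase K Q w S A as "sorted_gap K Q S (K - p) / 4" l
    proof
      show "\<exists>i\<in>A. 4 * (sorted_gap K Q S (K - p) / 4) \<le> gap K Q S i"
        using sorted_gap_le_gap_in_subset[OF AK cA] p by simp
    qed (use S sep AK as close l False in \<open>auto simp: w_def\<close>)
    show ?thesis
      using step False accept_in_best accept_two_le reject_not_best as0
        qsar_invariant_accept[OF inv] qsar_invariant_reject[OF inv] by auto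
  qed
qed

lemma qsar_correct:
  fixes Q :: "nat \<Rightarrow> real" and q :: "nat \<Rightarrow> nat \<Rightarrow> real"
  assumes S: "S \<subseteq> {1..K}" "S \<noteq> {}" "{1..K} - S \<noteq> {}" "card S = m"
    and sep: "\<forall>i\<in>S. \<forall>j\<in>{1..K} - S. Q j < Q i"
    and close: "\<forall>p\<in>{1..K-1}. \<forall>i\<in>{1..K}.
      \<bar>q i (n_phase N K p) - Q i\<bar> < sorted_gap K Q S (K + 1 - p) / 4"
  shows "qsar N K m q = S"
proof -
  have inv: "qsar_invariant K S p (qsar_iter N K m q p)" if "p \<le> K - 1" for p
    using that
  proof (induction p)
    case 0
    have "0 < m" using S finite_subset[OF S(1)] by (auto simp: card_gt_0_iff)
    moreover have "S \<inter> {1..K} = S" using S by auto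
    ultimately show ?case using S unfolding qsar_invariant_def by simp
  next
    case (Suc p)
    obtain A Acc l where st: "qsar_iter N K m q p = (A, Acc, l)" by (metis prod_cases3)
    have "Suc p \<in> {1..K-1}" using Suc.prems by auto
    have "qsar_invariant K S p (A, Acc, l)" using Suc st by simp
    moreover have "p + 2 \<le> K" using Suc.prems by simp
    moreover have "\<forall>i\<in>{1..K}. \<bar>q i (n_phase N K (Suc p)) - Q i\<bar> < sorted_gap K Q S (K - p) / 4"
      using close \<open>Suc p \<in> {1..K-1}\<close> by fastforce
    ultimately show ?case
      using qsar_phase_invariant[OF S(1-3) sep] st by simp
  qed
  obtain A Acc l where st: "qsar_iter N K m q (K - 1) = (A, Acc, l)" by (metis prod_cases3)
  then have "qsar_invariant K S (K - 1) (A, Acc, l)" using inv[of "K - 1"] by simp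
  then have A: "card A = 1" "1 \<le> card (S \<inter> A)" and Acc: "Acc \<subseteq> S" "S \<subseteq> A \<union> Acc"
    using S unfolding qsar_invariant_def by auto
  obtain a where "A = {a}" using card_1_singletonE[OF A(1)] .
  moreover have "a \<in> S" using A(2) \<open>A = {a}\<close> by (cases "a \<in> S") auto
  ultimately show ?thesis using Acc unfolding qsar_def st by auto
qed

lemma qsar_error_subset:
  fixes Q :: "nat \<Rightarrow> real" and est :: "'a \<Rightarrow> nat \<Rightarrow> nat \<Rightarrow> real"
  assumes S: "S \<subseteq> {1..K}" "S \<noteq> {}" "{1..K} - S \<noteq> {}" "card S = m"
    and sep: "\<forall>i\<in>S. \<forall>j\<in>{1..K} - S. Q j < Q i"
    and \<delta>: "\<And>p. \<delta> p = sorted_gap K Q S (K + 1 - p) / 4"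
  shows "{\<omega>\<in>\<Omega>. qsar N K m (est \<omega>) \<noteq> S} \<subseteq> (\<Union>(p, i)\<in>{1..K-1} \<times> {1..K}.
    {\<omega>\<in>\<Omega>. Q i + \<delta> p \<le> est \<omega> i (n_phase N K p)} \<union> {\<omega>\<in>\<Omega>. est \<omega> i (n_phase N K p) \<le> Q i - \<delta> p})"
proof
  fix \<omega> assume \<omega>: "\<omega> \<in> {\<omega>\<in>\<Omega>. qsar N K m (est \<omega>) \<noteq> S}"
  then obtain p i where "(p, i) \<in> {1..K-1} \<times> {1..K}"
    and "\<not> \<bar>est \<omega> i (n_phase N K p) - Q i\<bar> < \<delta> p"
    using qsar_correct[OF S sep, where N=N and q="est \<omega>"] unfolding \<delta> by blast
  then show "\<omega> \<in> (\<Union>(p, i)\<in>{1..K-1} \<times> {1..K}.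
    {\<omega>\<in>\<Omega>. Q i + \<delta> p \<le> est \<omega> i (n_phase N K p)} \<union> {\<omega>\<in>\<Omega>. est \<omega> i (n_phase N K p) \<le> Q i - \<delta> p})"
    using \<omega> by force
qed

section \<open>Sample sizes and the error probability\<close>

lemma logbar_pos: "0 < logbar K"
  unfolding logbar_def by (simp add: add_pos_nonneg sum_nonneg)

lemma n_phase_ge:
  assumes p: "p \<in> {1..K-1}" and NK: "real K < real N"
  shows "(real N - real K) / (logbar K * real (K + 1 - p)) \<le> real (n_phase N K p)"
    and "1 \<le> n_phase N K p"
proof -
  define y where "y = 1 / logbar K * ((real N - real K) / real (K + 1 - p))"
  have "0 < y" unfolding y_def using logbar_pos p NK by auto
  have n: "n_phase N K p = nat \<lceil>y\<rceil>" unfolding n_phase_def y_def using p by auto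
  have "y \<le> real (n_phase N K p)" unfolding n using \<open>0 < y\<close> by linarith
  then show "(real N - real K) / (logbar K * real (K + 1 - p)) \<le> real (n_phase N K p)"
    by (simp add: y_def)
  show "1 \<le> n_phase N K p" unfolding n using \<open>0 < y\<close> by linarith
qed

lemma H_tau_ge:
  assumes "i \<in> {1..K}" "j \<in> {1..K}"
  shows "8 * real j / (1 - \<tau>) * (4 * (4 * (1 + \<tau>) / (1 - \<tau>)) / ((L i)\<^sup>2 * (sorted_gap K Q S j)\<^sup>2)
      + 4/3 * (2 * L i + b i * (1 - \<tau>) * (L i)\<^sup>2) / ((L i)\<^sup>2 * sorted_gap K Q S j))
    \<le> H_tau K \<tau> Q S L b"
  unfolding H_tau_def Let_def
  by (rule Max_ge) (use assms in \<open>auto intro!: rev_image_eqI[of "(i, j)"]\<close>)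

text \<open>The complexity term of arm \<open>i\<close> at rank \<open>j\<close> dominates \<open>j / (1 - \<tau>)\<close> times the cost
  of resolving a quarter of the gap \<open>\<Delta>\<close>, so the \<open>n \<ge> (N - K) / (logbar K \<cdot> j)\<close>
  samples of the phase pay for the exponent \<open>(N - K) / (logbar K \<cdot> H)\<close>.\<close>
lemma quantile_cost_phase_budget:
  fixes L \<Delta> b \<tau> j lg NK n H :: real
  assumes L: "0 < L" and \<Delta>: "0 < \<Delta>" and b: "0 \<le> b" and tau: "0 < \<tau>" "\<tau> < 1"
    and j: "1 \<le> j" and lg: "0 < lg" and NK: "0 < NK"
    and H: "8 * j / (1 - \<tau>) * (4 * (4 * (1 + \<tau>) / (1 - \<tau>)) / (L\<^sup>2 * \<Delta>\<^sup>2)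
              + 4/3 * (2 * L + b * (1 - \<tau>) * L\<^sup>2) / (L\<^sup>2 * \<Delta>)) \<le> H"
    and n: "NK / (lg * j) \<le> n"
  shows "NK / (lg * H) * quantile_cost \<tau> (L * (\<Delta> / 4)) \<le> n * (1 - \<tau>)"
proof -
  define x where "x = L * (\<Delta> / 4)"
  have x0: "0 < x" unfolding x_def using L \<Delta> by simp
  define W where "W = quantile_cost \<tau> x"
  have W0: "0 < W" unfolding W_def quantile_cost_def using x0 tau by (intro add_pos_pos) auto
  have e1: "4 * (4 * (1 + \<tau>) / (1 - \<tau>)) / (L\<^sup>2 * \<Delta>\<^sup>2) = (1 + \<tau>) / ((1 - \<tau>) * x\<^sup>2)"
    unfolding x_def using L \<Delta> tau by (simp add: field_simps power2_eq_square)
  have "2 / (3 * x) = (8 * L / 3) / (L\<^sup>2 * \<Delta>)"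
    unfolding x_def using L \<Delta> by (simp add: field_simps power2_eq_square)
  also have "\<dots> \<le> 4/3 * (2 * L + b * (1 - \<tau>) * L\<^sup>2) / (L\<^sup>2 * \<Delta>)"
    using L \<Delta> b tau by (intro divide_right_mono) auto
  finally have e2: "2 / (3 * x) \<le> 4/3 * (2 * L + b * (1 - \<tau>) * L\<^sup>2) / (L\<^sup>2 * \<Delta>)" .
  have "j / (1 - \<tau>) * W = 8 * j / (1 - \<tau>) * ((1 + \<tau>) / ((1 - \<tau>) * x\<^sup>2) + 2 / (3 * x))"
    unfolding W_def quantile_cost_def by (simp add: field_simps)
  also have "\<dots> \<le> H"
    using H e1 e2 tau j by (smt (verit) divide_nonneg_pos mult_left_mono)
  finally have jW: "j / (1 - \<tau>) * W \<le> H" .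
  have jW0: "0 < j / (1 - \<tau>) * W" using j tau W0 by simp
  have H0: "0 < H" using jW jW0 by linarith
  have "NK / (lg * H) * W \<le> NK / (lg * (j / (1 - \<tau>) * W)) * W"
    using jW jW0 lg NK W0 j tau H0 by (intro mult_right_mono divide_left_mono mult_left_mono mult_pos_pos) auto
  also have "\<dots> = NK / (lg * j) * (1 - \<tau>)" using W0 tau j lg by (simp add: field_simps)
  also have "\<dots> \<le> n * (1 - \<tau>)" using n tau by (intro mult_right_mono) auto
  finally show ?thesis unfolding W_def x_def .
qed

text \<open>The exponential condition holds because \<open>\<Delta> \<le> Q\<^sub>k\<close> for some arm \<open>k\<close> and
  \<open>Q\<^sub>k L\<^sub>k \<le> -ln (1 - \<tau>)\<close>.\<close>
lemma qsar_phase_requirements: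
  fixes Q L b :: "nat \<Rightarrow> real"
  assumes S: "S \<subseteq> {1..K}" "S \<noteq> {}" "{1..K} - S \<noteq> {}"
    and sep: "\<forall>i\<in>S. \<forall>j\<in>{1..K} - S. Q j < Q i"
    and tau: "0 < \<tau>" "\<tau> < 1" and NK: "real K < real N"
    and Q: "\<And>i. i \<in> {1..K} \<Longrightarrow> 0 \<le> Q i \<and> Q i * L i \<le> - ln (1 - \<tau>)"
    and b: "\<And>i. i \<in> {1..K} \<Longrightarrow> 0 \<le> b i"
    and i0: "i0 \<in> {1..K}" "0 < L i0" "\<And>i. i \<in> {1..K} \<Longrightarrow> L i0 \<le> L i"
    and p: "p \<in> {1..K-1}"
  defines "\<delta> \<equiv> sorted_gap K Q S (K + 1 - p) / 4"
  shows "1 \<le> n_phase N K p \<and> 0 < \<delta> \<and> exp (4 * (L i0 * \<delta>)) * (1 - \<tau>) \<le> 1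
    \<and> (real N - real K) / (logbar K * H_tau K \<tau> Q S L b) * quantile_cost \<tau> (L i0 * \<delta>)
       \<le> real (n_phase N K p) * (1 - \<tau>)"
proof -
  define j where "j = K + 1 - p"
  have j: "1 \<le> j" "j \<le> K" unfolding j_def using p by auto
  define \<Delta> where "\<Delta> = sorted_gap K Q S j"
  have "0 < \<Delta>" unfolding \<Delta>_def using sorted_gap_pos[OF S sep j] .
  then have \<delta>0: "0 < \<delta>" unfolding \<delta>_def \<Delta>_def j_def by simp
  have n1: "1 \<le> n_phase N K p" using n_phase_ge(2)[OF p NK] .
  obtain k where k: "k \<in> {1..K}" "\<Delta> \<le> Q k"
    using sorted_gap_le_quantile[OF S _ j] Q unfolding \<Delta>_def by blast
  have "0 \<le> L k" using i0(2) i0(3)[OF k(1)] by linarith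
  then have "L i0 * \<Delta> \<le> L k * Q k"
    using i0(3)[OF k(1)] k(2) \<open>0 < \<Delta>\<close> by (intro mult_mono) auto
  also have "\<dots> \<le> - ln (1 - \<tau>)" using Q[OF k(1)] by (simp add: mult.commute)
  finally have "exp (L i0 * \<Delta>) \<le> exp (- ln (1 - \<tau>))" by simp
  also have "\<dots> = 1 / (1 - \<tau>)" using tau by (simp add: exp_minus inverse_eq_divide)
  finally have "exp (L i0 * \<Delta>) \<le> 1 / (1 - \<tau>)" .
  then have small: "exp (4 * (L i0 * \<delta>)) * (1 - \<tau>) \<le> 1"
    unfolding \<delta>_def \<Delta>_def j_def using tau by (simp add: field_simps)
  have n: "(real N - real K) / (logbar K * real j) \<le> real (n_phase N K p)"
    using n_phase_ge(1)[OF p NK] unfolding j_def .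
  have "(real N - real K) / (logbar K * H_tau K \<tau> Q S L b) * quantile_cost \<tau> (L i0 * \<delta>)
       \<le> real (n_phase N K p) * (1 - \<tau>)"
    using quantile_cost_phase_budget[OF i0(2) \<open>0 < \<Delta>\<close> b[OF i0(1)] tau _ logbar_pos _ _ n]
      H_tau_ge[OF i0(1), of j] j NK unfolding \<delta>_def \<Delta>_def j_def by simp
  with \<delta>0 n1 small show ?thesis by blast
qed

lemma (in prob_space) qsar_error_prob_le:
  fixes X :: "nat \<Rightarrow> nat \<Rightarrow> 'a \<Rightarrow> real" and f :: "nat \<Rightarrow> real \<Rightarrow> real" and \<delta> :: "nat \<Rightarrow> real"
  assumes S: "S \<subseteq> {1..K}" "S \<noteq> {}" "{1..K} - S \<noteq> {}" "card S = m"
    and sep: "\<forall>i\<in>S. \<forall>j\<in>{1..K} - S. quantile (f j) \<tau> < quantile (f i) \<tau>"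
    and tau: "0 < \<tau>" "\<tau> < 1" and ihr: "\<And>i. i \<in> {1..K} \<Longrightarrow> IHR (f i)"
    and distr: "\<And>i k. i \<in> {1..K} \<Longrightarrow> distr M borel (X i k) = dens_meas (f i)"
    and indep: "indep_vars (\<lambda>_. borel) (\<lambda>(i, k). X i k) ({1..K} \<times> UNIV)"
    and L: "0 < L" "\<And>i. i \<in> {1..K} \<Longrightarrow> L \<le> hazard_lb (f i)" and T: "2 \<le> T"
    and \<delta>: "\<And>p. \<delta> p = sorted_gap K (\<lambda>i. quantile (f i) \<tau>) S (K + 1 - p) / 4"
    and phase: "\<And>p. p \<in> {1..K-1} \<Longrightarrow> 1 \<le> n_phase N K p \<and> 0 < \<delta> p
      \<and> exp (4 * (L * \<delta> p)) * (1 - \<tau>) \<le> 1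
      \<and> T * quantile_cost \<tau> (L * \<delta> p) \<le> real (n_phase N K p) * (1 - \<tau>)"
  shows "prob {\<omega>\<in>space M. qsar N K m (\<lambda>i n. emp_quantile \<tau> (map (\<lambda>k. X i k \<omega>) [0..<n])) \<noteq> S}
    \<le> 2 * real K ^ 2 * exp (- T)"
proof -
  define est where "est \<omega> i n = emp_quantile \<tau> (map (\<lambda>k. X i k \<omega>) [0..<n])" for \<omega> i n
  define E where "E = (\<lambda>(p, i). {\<omega>\<in>space M. quantile (f i) \<tau> + \<delta> p \<le> est \<omega> i (n_phase N K p)}
    \<union> {\<omega>\<in>space M. est \<omega> i (n_phase N K p) \<le> quantile (f i) \<tau> - \<delta> p})"
  let ?PI = "{1..K-1} \<times> {1..K}"
  have tail: "E pi \<in> events \<and> prob (E pi) \<le> 2 * exp (- T)" if mem: "pi \<in> ?PI" for pi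
  proof -
    obtain p i where pi: "pi = (p, i)" "p \<in> {1..K-1}" "i \<in> {1..K}"
      using mem by (cases pi) auto
    note row = indep_vars_row[OF indep pi(3)]
    have "(\<lambda>\<omega>. est \<omega> i (n_phase N K p)) \<in> borel_measurable M"
      unfolding est_def using row[of UNIV] tau
      by (intro borel_measurable_emp_quantile) (auto simp: indep_vars_def)
    then have "E pi \<in> events" unfolding E_def pi case_prod_conv by measurable
    moreover have "prob (E pi) \<le> 2 * exp (- T)"
      using phase[OF pi(2)] emp_quantile_deviation[OF ihr[OF pi(3)] row, of "n_phase N K p"]
        distr[OF pi(3)] tau L(1) L(2)[OF pi(3)] T
      unfolding E_def est_def pi case_prod_conv by auto
    ultimately show ?thesis by simp
  qed
  have "prob {\<omega>\<in>space M. qsar N K m (est \<omega>) \<noteq> S} \<le> prob (\<Union>pi\<in>?PI. E pi)"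
    using qsar_error_subset[OF S sep \<delta>, of "space M" N est] tail
    by (intro finite_measure_mono) (auto simp: E_def split_beta intro!: sets.finite_UN)
  also have "\<dots> \<le> (\<Sum>pi\<in>?PI. prob (E pi))"
    using tail by (intro measure_UNION_le) auto
  also have "\<dots> \<le> real (card ?PI) * (2 * exp (- T))"
    using tail sum_bounded_above[of ?PI "\<lambda>pi. prob (E pi)"] by auto
  also have "\<dots> \<le> 2 * real K ^ 2 * exp (- T)"
  proof -
    have "card ?PI \<le> K * K" by (simp add: card_cartesian_product)
    then have "real (card ?PI) \<le> real K ^ 2" by (metis of_nat_le_iff of_nat_mult power2_eq_square)
    then show ?thesis by (simp add: mult_right_mono)
  qed
  finally show ?thesis unfolding est_def .
qed

lemma one_le_two_sq_exp:
  assumes "2 \<le> K" "T < 2"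
  shows "1 \<le> 2 * real K ^ 2 * exp (- T)"
proof -
  have "exp (2::real) = exp 1 * exp 1" by (simp add: mult_exp_exp)
  also have "\<dots> \<le> (272/100) * (272/100)" using e_less_272 by (intro mult_mono) auto
  finally have "exp (2::real) \<le> 8" by simp
  then have "1 \<le> 8 * exp (- 2::real)" by (simp add: exp_minus field_simps)
  also have "\<dots> \<le> 2 * real K ^ 2 * exp (- T)"
    using assms power_mono[of 2 "real K" 2] by (intro mult_mono) auto
  finally show ?thesis .
qed

theorem theorem4:
  fixes M :: "'w measure" and X :: "nat \<Rightarrow> nat \<Rightarrow> 'w \<Rightarrow> real"
    and f :: "nat \<Rightarrow> real \<Rightarrow> real" and b :: "nat \<Rightarrow> real"
    and K m N :: nat and \<tau> :: real and Sstar :: "nat set"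
  assumes P: "prob_space M"
    and K: "K \<ge> 2" and m: "1 \<le> m" "m < K"
    and tau: "0 < \<tau>" "\<tau> < 1"
    and budget: "real N \<ge> 4 / (1 - \<tau>) * logbar K + real K"
    and ihr: "\<forall>i\<in>{1..K}. IHR (f i) \<and> C1_density (f i)"
    and rv: "\<forall>i\<in>{1..K}. \<forall>k. X i k \<in> borel_measurable M"
    and distr: "\<forall>i\<in>{1..K}. \<forall>k. distr M borel (X i k) = dens_meas (f i)"
    and indep: "prob_space.indep_vars M (\<lambda>_. borel) (\<lambda>(i,k). X i k) ({1..K} \<times> UNIV)"
    and bias: "\<forall>i\<in>{1..K}. 0 \<le> b i \<and> (\<forall>n\<ge>1.
        \<bar>prob_space.expectation M (\<lambda>\<omega>. emp_quantile \<tau> (map (\<lambda>k. X i k \<omega>) [0..<n]))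
          - quantile (f i) \<tau>\<bar> \<le> b i / real n)"
    and Sstar: "Sstar \<subseteq> {1..K}" "card Sstar = m"
      "\<forall>i\<in>Sstar. \<forall>j\<in>{1..K} - Sstar. quantile (f j) \<tau> < quantile (f i) \<tau>"
  shows "measure M {\<omega>\<in>space M.
           qsar N K m (\<lambda>i n. emp_quantile \<tau> (map (\<lambda>k. X i k \<omega>) [0..<n])) \<noteq> Sstar}
         \<le> 2 * real K ^ 2 * exp (- (real N - real K) /
              (logbar K * H_tau K \<tau> (\<lambda>i. quantile (f i) \<tau>) Sstar (\<lambda>i. hazard_lb (f i)) b))"
proof -
  interpret prob_space M by (rule P)
  define Q where "Q = (\<lambda>i. quantile (f i) \<tau>)"
  define L where "L = (\<lambda>i. hazard_lb (f i))"
  define T where "T = (real N - real K) / (logbar K * H_tau K \<tau> Q Sstar L b)"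
  have S: "Sstar \<noteq> {}" "{1..K} - Sstar \<noteq> {}"
    using Sstar(1,2) m card_mono[of Sstar "{1..K}"] by auto
  have "prob {\<omega>\<in>space M. qsar N K m (\<lambda>i n. emp_quantile \<tau> (map (\<lambda>k. X i k \<omega>) [0..<n])) \<noteq> Sstar}
      \<le> 2 * real K ^ 2 * exp (- T)"
  proof (cases "T < 2")
    case True
    then show ?thesis using one_le_two_sq_exp[OF K] prob_le_1 by (meson order_trans)
  next
    case False
    obtain i0 where i0: "i0 \<in> {1..K}" "L i0 = Min (L ` {1..K})"
      using Min_in[of "L ` {1..K}"] K by fastforce
    have L: "0 < L i" "L i0 \<le> L i" if "i \<in> {1..K}" for i
      using ihr that i0 unfolding L_def IHR_def by auto
    have NK: "real K < real N"
      using budget tau logbar_pos[of K] by (smt (verit) divide_pos_pos mult_pos_pos)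
    have sep: "\<forall>i\<in>Sstar. \<forall>j\<in>{1..K} - Sstar. Q j < Q i" using Sstar(3) unfolding Q_def .
    have Q: "0 \<le> Q i \<and> Q i * L i \<le> - ln (1 - \<tau>)" if "i \<in> {1..K}" for i
      using IHR_quantile(1)[of "f i" \<tau>] IHR_quantile_hazard_lb_le[of "f i" \<tau>] ihr that tau
      unfolding Q_def L_def by (auto intro: less_imp_le)
    have b: "0 \<le> b i" if "i \<in> {1..K}" for i using bias that by auto
    note phase = qsar_phase_requirements[where Q=Q and L=L and b=b,
        OF Sstar(1) S sep tau NK Q b i0(1) L(1)[OF i0(1)] L(2)]
    show ?thesis
      by (rule qsar_error_prob_le[where \<delta>="\<lambda>p. sorted_gap K Q Sstar (K + 1 - p) / 4",
            OF Sstar(1) S Sstar(2,3) tau _ _ indep L(1)[OF i0(1)]])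
         (use ihr distr False L phase in \<open>auto simp: Q_def L_def T_def\<close>)
  qed
  then show ?thesis unfolding T_def Q_def L_def by (simp add: minus_divide_left)
qed

end
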